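(* In the setting described in the context, let $\operatorname{zer}(A+B)$ be a nonempty closed convex set, suppose Method 2 does not stop, and let $(x^k)_{k\in\mathbb N}$ be the generated sequence. Define $\bar x:=P_{\operatorname{zer}(A+B)}(x^0)$. Then $(x^k)_{k\in\mathbb N}$ converges strongly to $\bar x$.
   Context: Let $\mathcal H$ be a real Hilbert space with inner product $\langle\cdot,\cdot\rangle$ and norm $\|\cdot\|$. Let $A_1:\mathcal H\to\mathcal H$ be $\beta$-cocoercive for some $\beta>0$ (i.e. $\langle A_1x-A_1y,x-y\rangle\ge\beta\|A_1x-A_1y\|^2$ for all $x,y$), let $A_2:\mathcal H\to\mathcal H$ be maximally monotone and uniformly continuous, let $B:\mathcal H\rightrightarrows\mathcal H$ be maximally monotone, and set $A:=A_1+A_2$; $\operatorname{zer}(A+B):=\{x:0\in Ax+Bx\}$. $J_{\alpha B}:=(I+\alpha B)^{-1}$ for $\alpha>0$, and $P_C$ denotes the orthogonal projection onto a nonempty closed convex set $C$. Fix $\theta,\delta\in(0,1)$, $\bar\delta>0$ with $1-\delta-\bar\delta>0$, and $\alpha_{-1}>0$ with $\alpha_{-1}\le4\beta\bar\delta$. Conceptual Algorithm: pick $x^0\in\mathcal H$. Given $x^k$ and $\alpha_{k-1}$, for $j\in\mathbb N$ let $\bar x^k_j:=J_{\alpha_{k-1}\theta^jB}(x^k-\alpha_{k-1}\theta^jAx^k)$ and let $j(k)$ be the smallest $j\in\mathbb N$ with $\alpha_{k-1}\theta^j\langle A_2x^k-A_2\bar x^k_j,x^k-\bar x^k_j\rangle\le\delta\|x^k-\bar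 x^k_j\|^2$. Set $\alpha_k:=\alpha_{k-1}\theta^{j(k)}$, $\bar x^k:=J_{\alpha_kB}(x^k-\alpha_kAx^k)$, $r_k:=\frac{\bar\delta}{\alpha_k}\|x^k-\bar x^k\|^2$, $T_k:=\{x\in\mathcal H:\langle \frac{x^k-\bar x^k}{\alpha_k}-(A_2x^k-A_2\bar x^k),x-\bar x^k\rangle\le r_k\}$ and $\Gamma_k:=\{x\in\mathcal H:\langle x^0-x^k,x-x^k\rangle\le0\}$. Method 2 sets $x^{k+1}:=P_{T_k\cap\Gamma_k}(x^0)$ and stops if $x^{k+1}=x^k$. *)

theory Defs
  imports "HOL-Analysis.Analysis"
begin

text \<open>Real Hilbert space: a complete real inner product space,
  i.e. a type of class real_inner and complete_space (possibly infinite-dimensional).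
  Set-valued operators are functions 'a => 'a set.\<close>

definition cocoercive :: "real \<Rightarrow> ('a::real_inner \<Rightarrow> 'a) \<Rightarrow> bool" where
  "cocoercive \<beta> T \<longleftrightarrow>
     (\<forall>x y. inner (T x - T y) (x - y) \<ge> \<beta> * (norm (T x - T y))\<^sup>2)"

definition monotone_op :: "('a::real_inner \<Rightarrow> 'a set) \<Rightarrow> bool" where
  "monotone_op B \<longleftrightarrow>
     (\<forall>x y u v. u \<in> B x \<longrightarrow> v \<in> B y \<longrightarrow> inner (u - v) (x - y) \<ge> 0)"

definition maximally_monotone :: "('a::real_inner \<Rightarrow> 'a set) \<Rightarrow> bool" where
  "maximally_monotone B \<longleftrightarrow> monotone_op B \<and>
     (\<forall>B'. monotone_op B' \<and> (\<forall>x. B x \<subseteq> B' x) \<longrightarrow> B' = B)"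

definition zer_sum :: "('a::real_inner \<Rightarrow> 'a) \<Rightarrow> ('a \<Rightarrow> 'a set) \<Rightarrow> 'a set" where
  "zer_sum A B = {x. \<exists>b\<in>B x. A x + b = 0}"

text \<open>Resolvent J_{\<alpha>B} = (I + \<alpha> B)^{-1}: the (unique, for maximally monotone B and
  \<alpha> > 0) point y with x \<in> y + \<alpha> B y.\<close>
definition resolvent :: "real \<Rightarrow> ('a::real_inner \<Rightarrow> 'a set) \<Rightarrow> 'a \<Rightarrow> 'a" where
  "resolvent \<alpha> B x = (THE y. \<exists>b\<in>B y. x = y + \<alpha> *\<^sub>R b)"

definition proj :: "'a::real_inner set \<Rightarrow> 'a \<Rightarrow> 'a" where
  "proj C a = (THE p. p \<in> C \<and> (\<forall>y\<in>C. norm (a - p) \<le> norm (a - y)))"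

definition fb_point :: "('a::real_inner \<Rightarrow> 'a) \<Rightarrow> ('a \<Rightarrow> 'a set) \<Rightarrow> real \<Rightarrow> 'a \<Rightarrow> 'a" where
  "fb_point A B s x = resolvent s B (x - s *\<^sub>R A x)"

definition ls_index ::
  "('a::real_inner \<Rightarrow> 'a) \<Rightarrow> ('a \<Rightarrow> 'a) \<Rightarrow> ('a \<Rightarrow> 'a set) \<Rightarrow> real \<Rightarrow> real \<Rightarrow> real \<Rightarrow> 'a \<Rightarrow> nat" where
  "ls_index A1 A2 B \<theta> \<delta> \<alpha> x =
     (LEAST j. let s = \<alpha> * \<theta> ^ j; z = fb_point (\<lambda>u. A1 u + A2 u) B s x in
        s * inner (A2 x - A2 z) (x - z) \<le> \<delta> * (norm (x - z))\<^sup>2)"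

definition T_set :: "('a::real_inner \<Rightarrow> 'a) \<Rightarrow> real \<Rightarrow> real \<Rightarrow> 'a \<Rightarrow> 'a \<Rightarrow> 'a set" where
  "T_set A2 \<delta>b \<alpha> x xb =
     {z. inner ((1 / \<alpha>) *\<^sub>R (x - xb) - (A2 x - A2 xb)) (z - xb)
           \<le> (\<delta>b / \<alpha>) * (norm (x - xb))\<^sup>2}"

definition Gamma_set :: "'a::real_inner \<Rightarrow> 'a \<Rightarrow> 'a set" where
  "Gamma_set x0 x = {z. inner (x0 - x) (z - x) \<le> 0}"

text \<open>Method 2. The step-size sequence is indexed with a shift:
  alpha k = \<alpha>_{k-1}, so alpha 0 = \<alpha>_{-1} and alpha (Suc k) = \<alpha>_k.\<close>
definition method2_seq ::
  "('a::real_inner \<Rightarrow> 'a) \<Rightarrow> ('a \<Rightarrow> 'a) \<Rightarrow> ('a \<Rightarrow> 'a set) \<Rightarrow> real \<Rightarrow> real \<Rightarrow> real \<Rightarrow> real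
     \<Rightarrow> (nat \<Rightarrow> 'a) \<Rightarrow> (nat \<Rightarrow> real) \<Rightarrow> bool" where
  "method2_seq A1 A2 B \<theta> \<delta> \<delta>b \<alpha>0 x alpha \<longleftrightarrow>
     alpha 0 = \<alpha>0 \<and>
     (\<forall>k. alpha (Suc k) = alpha k * \<theta> ^ ls_index A1 A2 B \<theta> \<delta> (alpha k) (x k) \<and>
          (let xb = fb_point (\<lambda>u. A1 u + A2 u) B (alpha (Suc k)) (x k) in
           x (Suc k) = proj (T_set A2 \<delta>b (alpha (Suc k)) (x k) xb \<inter> Gamma_set (x 0) (x k)) (x 0)))"

end

theory Submission
  imports Defs
begin

(* Both halfspaces T_k and Gamma_k contain Z = zer(A + B): for T_k this is where cocoercivity
   of A1 and the bound alpha_k <= 4 beta deltab enter, for Gamma_k it follows inductively from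
   the variational characterisation of x^(k+1) = P_(T_k inter Gamma_k)(x^0).  As x^(k+1) lies
   in Gamma_k and xbar = P_Z(x^0) in T_k inter Gamma_k, |x^k - x^0| increases to a limit
   L <= |xbar - x^0| and the steps x^(k+1) - x^k tend to 0.  Since x^(k+1) also lies in T_k,
   the forward-backward residuals x^k - xbar^k tend to 0 as well, and the backtracking rule
   makes them small relative to alpha_k infinitely often, so the points xbar^k are approximate
   zeros of A + B close to the ball of radius L about x^0.  A nested-intersection argument for
   bounded closed convex sets, which takes the place of weak compactness, turns them into a
   point z with |z - x^0| <= L solving Minty's variational inequality for A + B; resolvents of
   B (available by Minty's theorem, proved here with the Fitzpatrick function) show that z is
   a zero.  Therefore L = |xbar - x^0|, and |x^k - xbar|^2 <= L^2 - |x^k - x^0|^2 tends to 0. *)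

section \<open>Hilbert space geometry\<close>

lemma Cauchy_if_norm_diff_le:
  fixes X :: "nat \<Rightarrow> 'a::real_normed_vector"
  assumes bound: "\<And>m n. norm (X m - X n) \<le> e m + e n" and e: "e \<longlonglongrightarrow> 0"
  shows "Cauchy X"
proof (rule CauchyI)
  fix r :: real assume "0 < r"
  then obtain N where N: "\<And>n. n \<ge> N \<Longrightarrow> \<bar>e n\<bar> < r / 2"
    using LIMSEQ_D[OF e, of "r / 2"] by auto
  have "norm (X m - X n) < r" if "m \<ge> N" "n \<ge> N" for m n
    using bound[of m n] N[OF that(1)] N[OF that(2)] by linarith
  then show "\<exists>N. \<forall>m\<ge>N. \<forall>n\<ge>N. norm (X m - X n) < r" by blast
qed

lemma norm_convex_combination_sq:
  fixes a b :: "'a::real_inner"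
  shows "(norm ((1 - t) *\<^sub>R a + t *\<^sub>R b))\<^sup>2
    = (1 - t) * (norm a)\<^sup>2 + t * (norm b)\<^sup>2 - t * (1 - t) * (norm (a - b))\<^sup>2"
  unfolding power2_norm_eq_inner
  by (simp add: inner_add_left inner_add_right inner_diff_left inner_diff_right inner_commute
      algebra_simps)

lemma obtuse_pythagoras:
  fixes a p y :: "'a::real_inner"
  assumes "inner (a - p) (y - p) \<le> 0"
  shows "(norm (a - p))\<^sup>2 + (norm (y - p))\<^sup>2 \<le> (norm (a - y))\<^sup>2"
proof -
  have "a - y = (a - p) - (y - p)" by simp
  then have "(norm (a - y))\<^sup>2 = (norm (a - p))\<^sup>2 - 2 * inner (a - p) (y - p) + (norm (y - p))\<^sup>2"
    by (simp only: power2_norm_eq_inner inner_diff_left inner_diff_right inner_commute) simp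
  with assms show ?thesis by linarith
qed

text \<open>In the next three lemmas \<open>R z c\<close> encodes \<open>f z \<le> c\<close> for a function \<open>f\<close> that may take
  the value \<open>+\<infinity>\<close>; the first assumption says that \<open>f\<close> is \<open>\<kappa>\<close>-strongly convex.\<close>

lemma strongly_convex_quadratic_growth:
  assumes strongly_convex: "\<And>z z' c c' t. R z c \<Longrightarrow> R z' c' \<Longrightarrow> 0 < t \<Longrightarrow> t < 1 \<Longrightarrow>
      R ((1 - t) *\<^sub>R z + t *\<^sub>R z') ((1 - t) * c + t * c' - t * (1 - t) * \<kappa> * (norm (z - z'))\<^sup>2)"
    and min: "R z m" "\<And>z c. R z c \<Longrightarrow> m \<le> c" and "R w c"
  shows "m + \<kappa> * (norm (w - z))\<^sup>2 \<le> c"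
proof -
  define q where "q = \<kappa> * (norm (w - z))\<^sup>2"
  have shrink: "(1 - t) * q \<le> c - m" if "0 < t" "t < 1" for t
  proof -
    have "t * ((1 - t) * q) \<le> t * (c - m)"
      using min(2)[OF strongly_convex[OF min(1) \<open>R w c\<close> that]]
      by (simp add: q_def norm_minus_commute algebra_simps)
    then show ?thesis using \<open>0 < t\<close> by simp
  qed
  have "\<forall>\<^sub>F t in at_right 0. (1 - t) * q \<le> c - m"
    using eventually_at_right_real[of 0 1] by (rule eventually_mono) (use shrink in auto)
  moreover have "((\<lambda>t. (1 - t) * q) \<longlongrightarrow> (1 - 0) * q) (at_right 0)"
    by (intro tendsto_intros)
  ultimately have "(1 - 0) * q \<le> c - m"
    by (intro tendsto_upperbound) auto
  then show ?thesis by (simp add: q_def)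
qed

lemma strongly_convex_minimizing_sequence_converges:
  fixes Z :: "nat \<Rightarrow> 'a::{real_normed_vector,complete_space}"
  assumes strongly_convex: "\<And>z z' c c' t. R z c \<Longrightarrow> R z' c' \<Longrightarrow> 0 < t \<Longrightarrow> t < 1 \<Longrightarrow>
      R ((1 - t) *\<^sub>R z + t *\<^sub>R z') ((1 - t) * c + t * c' - t * (1 - t) * \<kappa> * (norm (z - z'))\<^sup>2)"
    and m_le: "\<And>z c. R z c \<Longrightarrow> m \<le> c" and \<kappa>: "0 < \<kappa>"
    and ZC: "\<And>n. R (Z n) (C n)" and C_lt: "\<And>n. C n < m + inverse (real (Suc n))"
  shows "convergent Z"
proof -
  define e where "e n = sqrt (2 * inverse (real (Suc n)) / \<kappa>)" for n
  have "norm (Z n - Z k) \<le> e n + e k" for n k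
  proof -
    have "m \<le> (C n + C k) / 2 - \<kappa> / 4 * (norm (Z n - Z k))\<^sup>2"
      using m_le[OF strongly_convex[OF ZC ZC, of "1/2" n k]] by (simp add: algebra_simps)
    then have "\<kappa> * (norm (Z n - Z k))\<^sup>2 \<le> 2 * (C n - m) + 2 * (C k - m)"
      by (simp add: field_simps)
    also have "\<dots> \<le> 2 * inverse (real (Suc n)) + 2 * inverse (real (Suc k))"
      using C_lt[of n] C_lt[of k] by argo
    finally have "(norm (Z n - Z k))\<^sup>2
        \<le> 2 * inverse (real (Suc n)) / \<kappa> + 2 * inverse (real (Suc k)) / \<kappa>"
      unfolding add_divide_distrib[symmetric] using \<kappa> by (simp add: pos_le_divide_eq mult.commute)
    then have "norm (Z n - Z k)
        \<le> sqrt (2 * inverse (real (Suc n)) / \<kappa> + 2 * inverse (real (Suc k)) / \<kappa>)"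
      by (rule real_le_rsqrt)
    also have "\<dots> \<le> e n + e k"
      unfolding e_def using \<kappa> by (intro sqrt_add_le_add_sqrt) auto
    finally show ?thesis .
  qed
  moreover have "(\<lambda>n. sqrt (2 * inverse (real (Suc n)) / \<kappa>)) \<longlonglongrightarrow> sqrt (2 * 0 / \<kappa>)"
    using \<kappa> by (intro tendsto_intros LIMSEQ_inverse_real_of_nat) auto
  then have "e \<longlonglongrightarrow> 0" unfolding e_def by simp
  ultimately show ?thesis
    using Cauchy_if_norm_diff_le Cauchy_convergent_iff by blast
qed

lemma strongly_convex_attains_inf:
  fixes R :: "'a::{real_normed_vector,complete_space} \<Rightarrow> real \<Rightarrow> bool"
  assumes strongly_convex: "\<And>z z' c c' t. R z c \<Longrightarrow> R z' c' \<Longrightarrow> 0 < t \<Longrightarrow> t < 1 \<Longrightarrow>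
      R ((1 - t) *\<^sub>R z + t *\<^sub>R z') ((1 - t) * c + t * c' - t * (1 - t) * \<kappa> * (norm (z - z'))\<^sup>2)"
    and lsc: "\<And>Z C z c. (\<And>n. R (Z n) (C n)) \<Longrightarrow> Z \<longlonglongrightarrow> z \<Longrightarrow> C \<longlonglongrightarrow> c \<Longrightarrow> R z c"
    and bounded: "\<And>z c. R z c \<Longrightarrow> b \<le> c"
    and nonempty: "R w d" and \<kappa>: "0 < \<kappa>"
  shows "\<exists>z m. R z m \<and> (\<forall>w c. R w c \<longrightarrow> m + \<kappa> * (norm (w - z))\<^sup>2 \<le> c)"
proof -
  define m where "m = Inf {c. \<exists>z. R z c}"
  have bdd: "bdd_below {c. \<exists>z. R z c}" unfolding bdd_below_def using bounded by blast
  have m_le: "m \<le> c" if "R z c" for z c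
    unfolding m_def using bdd that by (auto intro: cInf_lower)
  have "\<exists>z c. R z c \<and> c < m + inverse (real (Suc n))" for n
  proof -
    have "m < m + inverse (real (Suc n))" by simp
    then show ?thesis
      using cInf_lessD[of "{c. \<exists>z. R z c}"] nonempty unfolding m_def by blast
  qed
  then obtain Z C where ZC: "\<And>n. R (Z n) (C n)" and C_lt: "\<And>n. C n < m + inverse (real (Suc n))"
    by metis
  have "convergent Z"
    using strongly_convex m_le \<kappa> ZC C_lt by (rule strongly_convex_minimizing_sequence_converges)
  then obtain z where Z: "Z \<longlonglongrightarrow> z" unfolding convergent_def by blast
  have "C \<longlonglongrightarrow> m"
  proof (rule tendsto_sandwich)
    show "\<forall>\<^sub>F n in sequentially. m \<le> C n"
      using m_le[OF ZC] by (intro always_eventually allI)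
    show "\<forall>\<^sub>F n in sequentially. C n \<le> m + inverse (real (Suc n))"
      using C_lt by (intro always_eventually allI less_imp_le)
    show "(\<lambda>n. m + inverse (real (Suc n))) \<longlonglongrightarrow> m"
      by (rule LIMSEQ_inverse_real_of_nat_add)
  qed simp
  with ZC Z have "R z m" by (rule lsc)
  moreover have "m + \<kappa> * (norm (w - z))\<^sup>2 \<le> c" if "R w c" for w c
    using strongly_convex \<open>R z m\<close> m_le that by (rule strongly_convex_quadratic_growth)
  ultimately show ?thesis by blast
qed

lemma nearest_point_pythagoras:
  fixes C :: "'a::{real_inner,complete_space} set"
  assumes C: "closed C" "convex C" "C \<noteq> {}"
  obtains p where "p \<in> C" "\<And>y. y \<in> C \<Longrightarrow> (norm (a - p))\<^sup>2 + (norm (y - p))\<^sup>2 \<le> (norm (a - y))\<^sup>2"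
proof -
  define R where "R y c \<longleftrightarrow> y \<in> C \<and> (norm (a - y))\<^sup>2 \<le> c" for y c
  obtain y0 where "y0 \<in> C" using C(3) by blast
  have "\<exists>p m. R p m \<and> (\<forall>y c. R y c \<longrightarrow> m + 1 * (norm (y - p))\<^sup>2 \<le> c)"
  proof (rule strongly_convex_attains_inf[where R = R and b = 0])
    fix z z' :: 'a and c c' t :: real
    assume R: "R z c" "R z' c'" and t: "0 < t" "t < 1"
    have "(1 - t) *\<^sub>R z + t *\<^sub>R z' \<in> C"
      using R t C(2) unfolding R_def by (intro convexD) auto
    moreover have "a - ((1 - t) *\<^sub>R z + t *\<^sub>R z') = (1 - t) *\<^sub>R (a - z) + t *\<^sub>R (a - z')"
      by (simp add: algebra_simps)
    moreover have "(a - z) - (a - z') = - (z - z')" by simp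
    moreover have "(1 - t) * (norm (a - z))\<^sup>2 + t * (norm (a - z'))\<^sup>2 \<le> (1 - t) * c + t * c'"
      using R t unfolding R_def by (intro add_mono mult_left_mono) auto
    ultimately show "R ((1 - t) *\<^sub>R z + t *\<^sub>R z') ((1 - t) * c + t * c' - t * (1 - t) * 1 * (norm (z - z'))\<^sup>2)"
      unfolding R_def by (simp only: norm_convex_combination_sq norm_minus_cancel) simp
  next
    fix Z :: "nat \<Rightarrow> 'a" and Cs z c
    assume R: "\<And>n. R (Z n) (Cs n)" and lim: "Z \<longlonglongrightarrow> z" "Cs \<longlonglongrightarrow> c"
    have "z \<in> C" using R unfolding R_def by (intro closed_sequentially[OF C(1) _ lim(1)]) auto
    moreover have "(\<lambda>n. (norm (a - Z n))\<^sup>2) \<longlonglongrightarrow> (norm (a - z))\<^sup>2"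
      by (intro tendsto_intros lim)
    then have "(norm (a - z))\<^sup>2 \<le> c"
      using lim(2) R unfolding R_def by (intro LIMSEQ_le) auto
    ultimately show "R z c" unfolding R_def by simp
  next
    show "R y0 ((norm (a - y0))\<^sup>2)" using \<open>y0 \<in> C\<close> unfolding R_def by simp
  qed (auto simp: R_def intro: order_trans[OF zero_le_power2])
  then obtain p m where "p \<in> C" "(norm (a - p))\<^sup>2 \<le> m"
    and grow: "\<And>y. y \<in> C \<Longrightarrow> m + (norm (y - p))\<^sup>2 \<le> (norm (a - y))\<^sup>2"
    unfolding R_def by auto
  show ?thesis
  proof (rule that[OF \<open>p \<in> C\<close>])
    show "(norm (a - p))\<^sup>2 + (norm (y - p))\<^sup>2 \<le> (norm (a - y))\<^sup>2" if "y \<in> C" for y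
      using grow[OF that] \<open>(norm (a - p))\<^sup>2 \<le> m\<close> by linarith
  qed
qed

lemma
  fixes C :: "'a::{real_inner,complete_space} set"
  assumes C: "closed C" "convex C" "C \<noteq> {}"
  shows proj_in: "proj C a \<in> C"
    and proj_pythagoras:
      "y \<in> C \<Longrightarrow> (norm (a - proj C a))\<^sup>2 + (norm (y - proj C a))\<^sup>2 \<le> (norm (a - y))\<^sup>2"
proof -
  obtain p where p: "p \<in> C"
    and grow: "\<And>y. y \<in> C \<Longrightarrow> (norm (a - p))\<^sup>2 + (norm (y - p))\<^sup>2 \<le> (norm (a - y))\<^sup>2"
    using nearest_point_pythagoras[OF C] by blast
  have "proj C a = p"
    unfolding proj_def
  proof (rule the_equality)
    have "norm (a - p) \<le> norm (a - y)" if "y \<in> C" for y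
    proof (rule power2_le_imp_le)
      show "(norm (a - p))\<^sup>2 \<le> (norm (a - y))\<^sup>2"
        using grow[OF that] zero_le_power2[of "norm (y - p)"] by linarith
    qed simp
    with p show "p \<in> C \<and> (\<forall>y\<in>C. norm (a - p) \<le> norm (a - y))" by blast
    fix q assume q: "q \<in> C \<and> (\<forall>y\<in>C. norm (a - q) \<le> norm (a - y))"
    with p have "norm (a - q) \<le> norm (a - p)" by blast
    then have "(norm (a - q))\<^sup>2 \<le> (norm (a - p))\<^sup>2" by (rule power_mono) simp
    with grow[of q] q have "(norm (q - p))\<^sup>2 \<le> 0" by linarith
    then show "q = p" by simp
  qed
  with p show "proj C a \<in> C" by simp
  show "(norm (a - proj C a))\<^sup>2 + (norm (y - proj C a))\<^sup>2 \<le> (norm (a - y))\<^sup>2" if "y \<in> C"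
    using grow[OF that] \<open>proj C a = p\<close> by simp
qed

lemma proj_inner_le:
  fixes C :: "'a::{real_inner,complete_space} set"
  assumes "closed C" "convex C" "C \<noteq> {}" "y \<in> C"
  shows "inner (a - proj C a) (y - proj C a) \<le> 0"
proof -
  have "a - y = (a - proj C a) - (y - proj C a)" by simp
  then have "(norm (a - y))\<^sup>2
      = (norm (a - proj C a))\<^sup>2 - 2 * inner (a - proj C a) (y - proj C a) + (norm (y - proj C a))\<^sup>2"
    by (simp only: power2_norm_eq_inner inner_diff_left inner_diff_right inner_commute) simp
  with proj_pythagoras[OF assms, of a] show ?thesis by linarith
qed

lemma shifted_halfspace_eq: "{z. inner w (z - p) \<le> r} = {z. inner w z \<le> r + inner w p}"
  by (auto simp: inner_diff_right)

lemma proj_almost_farthest: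
  fixes D :: "'i \<Rightarrow> 'a::{real_inner,complete_space} set"
  assumes closed: "\<And>i. closed (D i)" and convex: "\<And>i. convex (D i)"
    and nonempty: "\<And>i. D i \<noteq> {}" and bounded: "\<And>i. D i \<subseteq> cball c R"
  obtains I where "\<And>j n. D j \<subseteq> D (I n) \<Longrightarrow>
    norm (proj (D j) c - proj (D (I n)) c) \<le> sqrt (inverse (real (Suc n)))"
proof -
  define P where "P i = proj (D i) c" for i
  define N where "N i = (norm (c - P i))\<^sup>2" for i
  have N_mono: "N i + (norm (P j - P i))\<^sup>2 \<le> N j" if "D j \<subseteq> D i" for i j
    unfolding N_def P_def
    using proj_pythagoras[OF closed convex nonempty, of "P j" i c] proj_in[OF closed convex nonempty] that
    by (simp add: P_def subset_eq)
  have "N i \<le> R\<^sup>2" for i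
    using bounded[of i] proj_in[OF closed convex nonempty, of i c]
    unfolding N_def P_def by (auto simp: dist_norm intro!: power_mono)
  then have bdd: "bdd_above (range N)" by (intro bdd_aboveI2) blast
  define S where "S = Sup (range N)"
  have N_le: "N i \<le> S" for i unfolding S_def using bdd by (auto intro: cSup_upper)
  have "\<exists>i. S - inverse (real (Suc n)) < N i" for n
    unfolding S_def using less_cSup_iff[OF _ bdd, of "S - inverse (real (Suc n))"]
    by (simp add: S_def)
  then obtain I where I: "\<And>n. S - inverse (real (Suc n)) < N (I n)" by metis
  show ?thesis
  proof (rule that)
    fix j n assume "D j \<subseteq> D (I n)"
    then have "(norm (P j - P (I n)))\<^sup>2 \<le> inverse (real (Suc n))"
      using N_mono[of j "I n"] N_le[of j] I[of n] by linarith
    then show "norm (proj (D j) c - proj (D (I n)) c) \<le> sqrt (inverse (real (Suc n)))"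
      unfolding P_def by (rule real_le_rsqrt)
  qed
qed

text \<open>This replaces weak compactness of bounded closed convex sets in the Hilbert space.\<close>

lemma directed_closed_convex_common_point:
  fixes D :: "'i \<Rightarrow> 'a::{real_inner,complete_space} set" and join :: "'i \<Rightarrow> 'i \<Rightarrow> 'i"
  assumes closed: "\<And>i. closed (D i)" and convex: "\<And>i. convex (D i)"
    and nonempty: "\<And>i. D i \<noteq> {}" and directed: "\<And>i j. D (join i j) \<subseteq> D i \<inter> D j"
    and bounded: "\<And>i. D i \<subseteq> cball c R"
  shows "\<exists>p. \<forall>i. p \<in> D i"
proof -
  define P where "P i = proj (D i) c" for i
  define e where "e n = sqrt (inverse (real (Suc n)))" for n
  obtain I where "\<And>j n. D j \<subseteq> D (I n) \<Longrightarrow>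
      norm (proj (D j) c - proj (D (I n)) c) \<le> sqrt (inverse (real (Suc n)))"
    using proj_almost_farthest[where D = D and c = c and R = R, OF closed convex nonempty bounded] by blast
  then have close: "\<And>j n. D j \<subseteq> D (I n) \<Longrightarrow> norm (P j - P (I n)) \<le> e n"
    unfolding P_def e_def .
  have e: "e \<longlonglongrightarrow> 0"
    unfolding e_def using tendsto_real_sqrt[OF LIMSEQ_inverse_real_of_nat] by simp
  have "norm (P (I m) - P (I n)) \<le> e m + e n" for m n
  proof -
    define j where "j = join (I m) (I n)"
    have "norm (P (I m) - P (I n)) \<le> norm (P j - P (I m)) + norm (P j - P (I n))"
      using norm_triangle_ineq4[of "P j - P (I n)" "P j - P (I m)"] by (simp add: norm_minus_commute)
    also have "\<dots> \<le> e m + e n"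
      using close[of j m] close[of j n] directed[of "I m" "I n"] unfolding j_def by (intro add_mono) auto
    finally show ?thesis .
  qed
  then have "Cauchy (\<lambda>n. P (I n))" using e by (rule Cauchy_if_norm_diff_le)
  then obtain p where p: "(\<lambda>n. P (I n)) \<longlonglongrightarrow> p"
    unfolding Cauchy_convergent_iff convergent_def by blast
  have "p \<in> D i" for i
  proof -
    have "norm (P (join (I n) i) - P (I n)) \<le> e n" for n
      using close[of "join (I n) i" n] directed[of "I n" i] by blast
    then have "(\<lambda>n. P (join (I n) i) - P (I n)) \<longlonglongrightarrow> 0"
      by (intro Lim_null_comparison[OF _ e] always_eventually allI)
    from tendsto_add[OF this p] have "(\<lambda>n. P (join (I n) i)) \<longlonglongrightarrow> p" by simp
    moreover have "P (join (I n) i) \<in> D i" for n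
    proof -
      have "P (join (I n) i) \<in> D (join (I n) i)"
        unfolding P_def by (rule proj_in[OF closed convex nonempty])
      with directed show ?thesis by blast
    qed
    ultimately show ?thesis by (rule closed_sequentially[OF closed, rotated])
  qed
  then show ?thesis by blast
qed

lemma le_if_le_add_inverse_Suc:
  fixes x y :: real
  assumes "\<And>n. x \<le> y + inverse (real (Suc n))"
  shows "x \<le> y"
  using assms by (intro LIMSEQ_le_const[OF LIMSEQ_inverse_real_of_nat_add]) auto

lemma halfspaces_common_point:
  fixes c :: "'a::{real_inner,complete_space}" and a :: "'i \<Rightarrow> 'a" and r :: "'i \<Rightarrow> real"
  assumes approx: "\<And>F \<epsilon>. finite F \<Longrightarrow> F \<subseteq> I \<Longrightarrow> 0 < \<epsilon> \<Longrightarrow>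
      \<exists>y. dist c y \<le> L + \<epsilon> \<and> (\<forall>i\<in>F. inner (a i) y \<le> r i + \<epsilon>)"
  shows "\<exists>z. dist c z \<le> L \<and> (\<forall>i\<in>I. inner (a i) z \<le> r i)"
proof -
  define tol where "tol n = inverse (real (Suc n))" for n
  define D where "D = (\<lambda>(l, n). cball c (L + tol n) \<inter> (\<Inter>i\<in>set l \<inter> I. {y. inner (a i) y \<le> r i + tol n}))"
  have tol: "0 < tol n" "tol n \<le> 1" for n unfolding tol_def by (simp_all add: inverse_le_1_iff)
  have tol_mono: "tol (max n n') \<le> tol n" for n n'
    unfolding tol_def by (simp add: le_imp_inverse_le)
  have "\<exists>p. \<forall>i. p \<in> D i"
  proof (rule directed_closed_convex_common_point[where join = "\<lambda>(l, n) (l', n'). (l @ l', max n n')"])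
    fix i
    show "closed (D i)" unfolding D_def
      by (auto intro!: closed_Int closed_INT closed_halfspace_le split: prod.split)
    show "convex (D i)" unfolding D_def
      by (auto intro!: convex_Int convex_INT convex_halfspace_le split: prod.split)
    show "D i \<noteq> {}"
    proof (cases i)
      case (Pair l n)
      obtain y where "dist c y \<le> L + tol n" "\<forall>i\<in>set l \<inter> I. inner (a i) y \<le> r i + tol n"
        using approx[of "set l \<inter> I" "tol n"] tol(1) by auto
      then show ?thesis unfolding D_def Pair by auto
    qed
    show "D i \<subseteq> cball c (L + 1)"
    proof
      fix y assume "y \<in> D i"
      then have "dist c y \<le> L + tol (snd i)" unfolding D_def by (auto split: prod.splits)
      with tol(2)[of "snd i"] show "y \<in> cball c (L + 1)" by simp
    qed
  next
    have D_mono: "D (l', m) \<subseteq> D (l, n)" if "set l \<subseteq> set l'" "tol m \<le> tol n" for l l' m n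
    proof
      fix y assume "y \<in> D (l', m)"
      then have "dist c y \<le> L + tol m" "\<forall>i\<in>set l \<inter> I. inner (a i) y \<le> r i + tol m"
        using that(1) unfolding D_def by auto
      with that(2) show "y \<in> D (l, n)" unfolding D_def by force
    qed
    fix i j :: "'i list \<times> nat"
    obtain l n l' n' where ij: "i = (l, n)" "j = (l', n')" by (cases i, cases j)
    have "tol (max n n') \<le> tol n" "tol (max n n') \<le> tol n'"
      using tol_mono[of n n'] tol_mono[of n' n] by (simp_all add: max.commute)
    then show "D ((\<lambda>(l, n) (l', n'). (l @ l', max n n')) i j) \<subseteq> D i \<inter> D j"
      unfolding ij using D_mono[of l "l @ l'"] D_mono[of l' "l @ l'"] by auto
  qed
  then obtain p where p: "\<And>i. p \<in> D i" by blast
  have "dist c p \<le> L + tol n" for n using p[of "([], n)"] unfolding D_def by simp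
  then have "dist c p \<le> L" unfolding tol_def by (rule le_if_le_add_inverse_Suc)
  moreover have "inner (a i) p \<le> r i" if "i \<in> I" for i
  proof -
    have "inner (a i) p \<le> r i + tol n" for n using p[of "([i], n)"] that unfolding D_def by simp
    then show ?thesis unfolding tol_def by (rule le_if_le_add_inverse_Suc)
  qed
  ultimately show ?thesis by blast
qed

lemma tendsto_zero_if_sq_le_linear:
  fixes D E :: "nat \<Rightarrow> real"
  assumes c: "0 < c" and K: "0 \<le> K" and D: "\<And>k. 0 \<le> D k" and E: "E \<longlonglongrightarrow> 0"
    and ineq: "\<And>k. c * (D k)\<^sup>2 \<le> K * (1 + D k) * E k"
  shows "D \<longlonglongrightarrow> 0"
proof (rule Lim_null_comparison)
  define b where "b k = 2 * K * \<bar>E k\<bar> / c" for k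
  have "D k \<le> b k + sqrt (b k)" for k
  proof -
    have "K * (1 + D k) * E k \<le> K * (1 + D k) * \<bar>E k\<bar>"
      using K D[of k] by (intro mult_left_mono) auto
    with ineq[of k] have sq: "c * (D k)\<^sup>2 \<le> K * (1 + D k) * \<bar>E k\<bar>" by linarith
    have b: "0 \<le> b k" unfolding b_def using c K by simp
    show ?thesis
    proof (cases "1 \<le> D k")
      case True
      have "K * (1 + D k) * \<bar>E k\<bar> \<le> K * (2 * D k) * \<bar>E k\<bar>"
        using True K by (intro mult_right_mono mult_left_mono) auto
      with sq have "(c * D k) * D k \<le> (2 * K * \<bar>E k\<bar>) * D k"
        by (simp add: power2_eq_square algebra_simps)
      then have "c * D k \<le> 2 * K * \<bar>E k\<bar>" using True by (simp add: mult_le_cancel_right)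
      then have "D k \<le> b k" unfolding b_def using c by (simp add: field_simps)
      with b show ?thesis using real_sqrt_ge_zero[OF b] by linarith
    next
      case False
      have "K * (1 + D k) * \<bar>E k\<bar> \<le> K * 2 * \<bar>E k\<bar>"
        using False K by (intro mult_right_mono mult_left_mono) auto
      with sq have "(D k)\<^sup>2 \<le> b k" unfolding b_def using c by (simp add: field_simps)
      then have "D k \<le> sqrt (b k)" by (rule real_le_rsqrt)
      with b show ?thesis by linarith
    qed
  qed
  then show "\<forall>\<^sub>F k in sequentially. norm (D k) \<le> b k + sqrt (b k)"
    using D by (intro always_eventually allI) simp
  have "(\<lambda>k. b k + sqrt (b k)) \<longlonglongrightarrow> 2 * K * \<bar>0\<bar> / c + sqrt (2 * K * \<bar>0\<bar> / c)"
    unfolding b_def using c by (intro tendsto_intros E) auto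
  then show "(\<lambda>k. b k + sqrt (b k)) \<longlonglongrightarrow> 0" by simp
qed

lemma norm_diff_le_by_chaining:
  fixes f :: "'a::real_normed_vector \<Rightarrow> 'b::real_normed_vector"
  assumes \<eta>: "0 < \<eta>" "\<And>x y. dist x y < \<eta> \<Longrightarrow> dist (f x) (f y) < 1"
    and "norm (x - y) \<le> real n * (\<eta> / 2)"
  shows "norm (f x - f y) \<le> real n"
  using assms(3)
proof (induction n arbitrary: x)
  case 0 then show ?case by simp
next
  case (Suc n)
  define w where "w = y + (real n / real (Suc n)) *\<^sub>R (x - y)"
  have "x - w = (1 - real n / real (Suc n)) *\<^sub>R (x - y)"
    unfolding w_def by (simp add: scaleR_diff_left)
  also have "1 - real n / real (Suc n) = 1 / real (Suc n)" by (simp add: field_simps)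
  finally have "norm (x - w) = norm (x - y) / real (Suc n)" by simp
  also have "\<dots> \<le> \<eta> / 2" using Suc.prems by (simp add: divide_le_eq mult.commute)
  finally have "norm (f x - f w) < 1" using \<eta> by (simp add: dist_norm)
  moreover have "norm (w - y) \<le> real n * (\<eta> / 2)"
  proof -
    have "norm (w - y) = real n / real (Suc n) * norm (x - y)" unfolding w_def by simp
    also have "\<dots> \<le> real n / real (Suc n) * (real (Suc n) * (\<eta> / 2))"
      using Suc.prems by (intro mult_left_mono) auto
    finally show ?thesis by simp
  qed
  then have "norm (f w - f y) \<le> real n" by (rule Suc.IH)
  ultimately show ?case using norm_triangle_ineq[of "f x - f w" "f w - f y"] by simp
qed

lemma uniformly_continuous_linear_growth:
  fixes f :: "'a::real_normed_vector \<Rightarrow> 'b::real_normed_vector"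
  assumes "uniformly_continuous_on UNIV f"
  obtains C where "0 < C" "\<And>x y. norm (f x - f y) \<le> C * (1 + norm (x - y))"
proof -
  obtain \<eta> where \<eta>: "0 < \<eta>" "\<And>x y. dist x y < \<eta> \<Longrightarrow> dist (f x) (f y) < 1"
    using assms unfolding uniformly_continuous_on_def by (metis UNIV_I zero_less_one)
  have "norm (f x - f y) \<le> max 1 (2 / \<eta>) * (1 + norm (x - y))" for x y
  proof -
    define n where "n = nat \<lceil>norm (x - y) / (\<eta> / 2)\<rceil>"
    have "real n = of_int \<lceil>norm (x - y) / (\<eta> / 2)\<rceil>"
      unfolding n_def using \<eta>(1) by simp
    then have "norm (x - y) / (\<eta> / 2) \<le> real n" "real n \<le> norm (x - y) / (\<eta> / 2) + 1"
      by linarith+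
    moreover have "norm (x - y) / (\<eta> / 2) = 2 / \<eta> * norm (x - y)" by simp
    ultimately have "norm (x - y) \<le> real n * (\<eta> / 2)" "real n \<le> 2 / \<eta> * norm (x - y) + 1"
      using \<eta>(1) by (simp_all add: divide_le_eq mult.commute)
    moreover from \<eta> this(1) have "norm (f x - f y) \<le> real n" by (rule norm_diff_le_by_chaining)
    ultimately have "norm (f x - f y) \<le> 2 / \<eta> * norm (x - y) + 1" by linarith
    also have "\<dots> \<le> max 1 (2 / \<eta>) * norm (x - y) + max 1 (2 / \<eta>)"
      by (intro add_mono mult_right_mono) auto
    also have "\<dots> = max 1 (2 / \<eta>) * (1 + norm (x - y))" by (simp add: algebra_simps)
    finally show ?thesis .
  qed
  then show ?thesis using that[of "max 1 (2 / \<eta>)"] by simp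
qed

section \<open>Maximally monotone operators and Minty's theorem\<close>

lemma maximally_monotoneD:
  "maximally_monotone M \<Longrightarrow> u \<in> M x \<Longrightarrow> v \<in> M y \<Longrightarrow> 0 \<le> inner (u - v) (x - y)"
  unfolding maximally_monotone_def monotone_op_def by blast

lemma maximally_monotone_memI:
  assumes max: "maximally_monotone M"
    and related: "\<And>y v. v \<in> M y \<Longrightarrow> 0 \<le> inner (v - u) (y - x)"
  shows "u \<in> M x"
proof -
  define M' where "M' = M(x := insert u (M x))"
  have "monotone_op M'"
    unfolding monotone_op_def
  proof (intro allI impI)
    fix y y' v v' assume "v \<in> M' y" "v' \<in> M' y'"
    then consider "v \<in> M y" "v' \<in> M y'" | "y = x" "v = u" "v' \<in> M y'"
      | "y' = x" "v' = u" "v \<in> M y" | "y = x" "v = u" "y' = x" "v' = u"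
      unfolding M'_def by (auto split: if_splits)
    then show "0 \<le> inner (v - v') (y - y')"
    proof cases
      case 1 then show ?thesis using maximally_monotoneD[OF max] by blast
    next
      case 2
      then have "0 \<le> inner (v' - v) (y' - y)" using related by blast
      then show ?thesis by (simp add: inner_diff_left inner_diff_right)
    qed (use related in auto)
  qed
  moreover have "\<forall>y. M y \<subseteq> M' y" unfolding M'_def by auto
  ultimately have "M' = M" using max unfolding maximally_monotone_def by blast
  then show ?thesis unfolding M'_def by (metis fun_upd_same insertI1)
qed

lemma maximally_monotoneI:
  assumes mono: "monotone_op M"
    and mem: "\<And>x u. (\<And>y v. v \<in> M y \<Longrightarrow> 0 \<le> inner (v - u) (y - x)) \<Longrightarrow> u \<in> M x"
  shows "maximally_monotone M"
proof -
  have "M' = M" if "monotone_op M'" "\<forall>y. M y \<subseteq> M' y" for M'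
  proof -
    have "M' x \<subseteq> M x" for x
    proof
      fix u assume "u \<in> M' x"
      then show "u \<in> M x" using that unfolding monotone_op_def by (intro mem) blast
    qed
    with that(2) show ?thesis by blast
  qed
  with mono show ?thesis unfolding maximally_monotone_def by blast
qed

text \<open>\<open>fitzpatrick_le M z c\<close> says \<open>F\<^sub>M z \<le> c\<close> for the Fitzpatrick function
  \<open>F\<^sub>M (x, u) = sup {\<langle>x, v\<rangle> + \<langle>y, u\<rangle> - \<langle>y, v\<rangle> | v \<in> M y}\<close>, which may be infinite.\<close>

definition fitzpatrick_le :: "('a::real_inner \<Rightarrow> 'a set) \<Rightarrow> 'a \<times> 'a \<Rightarrow> real \<Rightarrow> bool" where
  "fitzpatrick_le M z c \<longleftrightarrow>
     (\<forall>y v. v \<in> M y \<longrightarrow> inner (fst z) v + inner y (snd z) - inner y v \<le> c)"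

lemma fitzpatrick_le_graph:
  assumes "maximally_monotone M" "u \<in> M x"
  shows "fitzpatrick_le M (x, u) (inner x u)"
  unfolding fitzpatrick_le_def
proof (intro allI impI)
  fix y v assume "v \<in> M y"
  then have "0 \<le> inner (u - v) (x - y)" using assms by (intro maximally_monotoneD)
  then show "inner (fst (x, u)) v + inner y (snd (x, u)) - inner y v \<le> inner x u"
    by (simp add: inner_diff_left inner_diff_right inner_commute)
qed

lemma fitzpatrick_le_pairing:
  assumes max: "maximally_monotone M" and F: "fitzpatrick_le M (x, u) c"
  shows "inner x u \<le> c"
proof (rule ccontr)
  assume "\<not> inner x u \<le> c"
  have "u \<in> M x"
  proof (rule maximally_monotone_memI[OF max])
    fix y v assume "v \<in> M y"
    then have "inner x v + inner y u - inner y v \<le> c" using F unfolding fitzpatrick_le_def by auto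
    with \<open>\<not> inner x u \<le> c\<close> show "0 \<le> inner (v - u) (y - x)"
      by (simp add: inner_diff_left inner_diff_right inner_commute)
  qed
  with F have "inner x u + inner x u - inner x u \<le> c"
    unfolding fitzpatrick_le_def by (metis fst_conv snd_conv)
  with \<open>\<not> inner x u \<le> c\<close> show False by simp
qed

lemma fitzpatrick_le_convex:
  assumes "fitzpatrick_le M z c" "fitzpatrick_le M z' c'" "0 \<le> t" "t \<le> 1"
  shows "fitzpatrick_le M ((1 - t) *\<^sub>R z + t *\<^sub>R z') ((1 - t) * c + t * c')"
  unfolding fitzpatrick_le_def
proof (intro allI impI)
  fix y v assume "v \<in> M y"
  then have "inner (fst z) v + inner y (snd z) - inner y v \<le> c"
    "inner (fst z') v + inner y (snd z') - inner y v \<le> c'"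
    using assms(1,2) unfolding fitzpatrick_le_def by auto
  then have "(1 - t) * (inner (fst z) v + inner y (snd z) - inner y v)
      + t * (inner (fst z') v + inner y (snd z') - inner y v) \<le> (1 - t) * c + t * c'"
    using assms(3,4) by (intro add_mono mult_left_mono) auto
  then show "inner (fst ((1 - t) *\<^sub>R z + t *\<^sub>R z')) v + inner y (snd ((1 - t) *\<^sub>R z + t *\<^sub>R z'))
      - inner y v \<le> (1 - t) * c + t * c'"
    by (simp add: inner_add_left inner_add_right algebra_simps)
qed

lemma fitzpatrick_le_limit:
  assumes "\<And>n. fitzpatrick_le M (Z n) (C n)" "Z \<longlonglongrightarrow> z" "C \<longlonglongrightarrow> c"
  shows "fitzpatrick_le M z c"
  unfolding fitzpatrick_le_def
proof (intro allI impI)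
  fix y v assume "v \<in> M y"
  have "(\<lambda>n. inner (fst (Z n)) v + inner y (snd (Z n)) - inner y v)
      \<longlonglongrightarrow> inner (fst z) v + inner y (snd z) - inner y v"
    by (intro tendsto_intros assms(2))
  with assms(1,3) \<open>v \<in> M y\<close> show "inner (fst z) v + inner y (snd z) - inner y v \<le> c"
    unfolding fitzpatrick_le_def by (intro LIMSEQ_le) auto
qed

lemma norm_Pair_sq: "(norm (x, u))\<^sup>2 = (norm x)\<^sup>2 + (norm u)\<^sup>2"
  by (simp add: norm_Pair)

lemma fitzpatrick_le_add_sq_lower:
  assumes "maximally_monotone M" "fitzpatrick_le M (x, u) (c - (norm (x, u))\<^sup>2 / 2)"
  shows "(norm (x + u))\<^sup>2 / 2 \<le> c"
proof -
  have "inner x u \<le> c - ((norm x)\<^sup>2 + (norm u)\<^sup>2) / 2"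
    using fitzpatrick_le_pairing assms unfolding norm_Pair_sq by blast
  then show ?thesis
    unfolding power2_norm_eq_inner by (simp add: inner_add_left inner_add_right inner_commute field_simps)
qed

lemma fitzpatrick_le_add_sq_convex:
  assumes "fitzpatrick_le M z (c - (norm z)\<^sup>2 / 2)" "fitzpatrick_le M z' (c' - (norm z')\<^sup>2 / 2)"
    and "0 < t" "t < 1"
  shows "fitzpatrick_le M ((1 - t) *\<^sub>R z + t *\<^sub>R z')
    ((1 - t) * c + t * c' - t * (1 - t) * (1 / 2) * (norm (z - z'))\<^sup>2
      - (norm ((1 - t) *\<^sub>R z + t *\<^sub>R z'))\<^sup>2 / 2)"
proof -
  have "fitzpatrick_le M ((1 - t) *\<^sub>R z + t *\<^sub>R z')
      ((1 - t) * (c - (norm z)\<^sup>2 / 2) + t * (c' - (norm z')\<^sup>2 / 2))"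
    using assms by (intro fitzpatrick_le_convex) auto
  moreover have "(1 - t) * (c - a / 2) + t * (c' - b / 2)
      = (1 - t) * c + t * c' - t * (1 - t) * (1 / 2) * d - ((1 - t) * a + t * b - t * (1 - t) * d) / 2"
    for a b d :: real
    by (simp add: field_simps)
  note this[of "(norm z)\<^sup>2" "(norm z')\<^sup>2" "(norm (z - z'))\<^sup>2", folded norm_convex_combination_sq]
  ultimately show ?thesis by metis
qed

text \<open>A minimiser \<open>(x, u)\<close> of \<open>F\<^sub>M(z) + \<parallel>z\<parallel>\<^sup>2 / 2\<close> over \<open>H \<times> H\<close>, with \<open>F\<^sub>M\<close> the Fitzpatrick
  function; its quadratic growth yields the inequality below.\<close>

lemma fitzpatrick_minimizer:
  fixes M :: "'a::{real_inner,complete_space} \<Rightarrow> 'a set"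
  assumes max: "maximally_monotone M"
  obtains x u where "\<And>y v. v \<in> M y \<Longrightarrow> (norm (x + u))\<^sup>2 \<le> inner (v + x) (y + u)"
proof -
  define R where "R z c \<longleftrightarrow> fitzpatrick_le M z (c - (norm z)\<^sup>2 / 2)" for z c
  have R_graph: "R (y, v) (inner y v + (norm (y, v))\<^sup>2 / 2)" if "v \<in> M y" for y v
    unfolding R_def using fitzpatrick_le_graph[OF max that] by simp
  obtain y0 v0 where "v0 \<in> M y0"
    using maximally_monotone_memI[OF max, of 0 0] by blast
  have "\<exists>z m. R z m \<and> (\<forall>w c. R w c \<longrightarrow> m + 1 / 2 * (norm (w - z))\<^sup>2 \<le> c)"
  proof (rule strongly_convex_attains_inf[where R = R and b = 0])
    fix z z' c c' and t :: real
    assume "R z c" "R z' c'" "0 < t" "t < 1"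
    then show "R ((1 - t) *\<^sub>R z + t *\<^sub>R z')
        ((1 - t) * c + t * c' - t * (1 - t) * (1 / 2) * (norm (z - z'))\<^sup>2)"
      unfolding R_def by (rule fitzpatrick_le_add_sq_convex)
  next
    fix Z C z c
    assume R: "\<And>n. R (Z n) (C n)" and lim: "Z \<longlonglongrightarrow> z" "C \<longlonglongrightarrow> c"
    have "(\<lambda>n. C n - (norm (Z n))\<^sup>2 / 2) \<longlonglongrightarrow> c - (norm z)\<^sup>2 / 2"
      by (intro tendsto_intros lim) simp
    with R lim(1) show "R z c"
      unfolding R_def by (rule fitzpatrick_le_limit)
  next
    fix z c assume "R z c"
    moreover obtain x u where "z = (x, u)" by (cases z)
    ultimately have "(norm (x + u))\<^sup>2 / 2 \<le> c"
      using fitzpatrick_le_add_sq_lower[OF max] unfolding R_def by simp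
    then show "0 \<le> c" using zero_le_power2[of "norm (x + u)"] by linarith
  next
    show "R (y0, v0) (inner y0 v0 + (norm (y0, v0))\<^sup>2 / 2)" using \<open>v0 \<in> M y0\<close> by (rule R_graph)
  qed simp
  then obtain x u m where "R (x, u) m" and grow: "\<And>w c. R w c \<Longrightarrow> m + (norm (w - (x, u)))\<^sup>2 / 2 \<le> c"
    by auto
  show ?thesis
  proof (rule that)
    fix y v assume "v \<in> M y"
    have "(norm (x + u))\<^sup>2 / 2 \<le> m"
      using \<open>R (x, u) m\<close> unfolding R_def by (rule fitzpatrick_le_add_sq_lower[OF max])
    moreover have "m + (norm ((y, v) - (x, u)))\<^sup>2 / 2 \<le> inner y v + (norm (y, v))\<^sup>2 / 2"
      using \<open>v \<in> M y\<close> by (intro grow R_graph)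
    ultimately have "(norm (x + u))\<^sup>2 / 2 + ((norm (y - x))\<^sup>2 + (norm (v - u))\<^sup>2) / 2
        \<le> inner y v + ((norm y)\<^sup>2 + (norm v)\<^sup>2) / 2"
      by (simp add: norm_Pair_sq)
    then show "(norm (x + u))\<^sup>2 \<le> inner (v + x) (y + u)"
      unfolding power2_norm_eq_inner
      by (simp add: inner_add_left inner_add_right inner_diff_left inner_diff_right inner_commute)
        argo
  qed
qed

lemma minty_zero:
  fixes M :: "'a::{real_inner,complete_space} \<Rightarrow> 'a set"
  assumes max: "maximally_monotone M"
  shows "\<exists>x. - x \<in> M x"
proof -
  obtain x u where key: "\<And>y v. v \<in> M y \<Longrightarrow> (norm (x + u))\<^sup>2 \<le> inner (v + x) (y + u)"
    using fitzpatrick_minimizer[OF max] by blast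
  have "- x \<in> M (- u)"
  proof (rule maximally_monotone_memI[OF max])
    fix y v assume "v \<in> M y"
    then have "(norm (x + u))\<^sup>2 \<le> inner (v + x) (y + u)" by (rule key)
    then show "0 \<le> inner (v - - x) (y - - u)" by (simp add: order_trans[OF zero_le_power2])
  qed
  with key[of "- x" "- u"] have "x + u = 0" by simp
  then have "u = - x" by (simp add: add_eq_0_iff)
  with \<open>- x \<in> M (- u)\<close> show ?thesis by auto
qed

theorem minty:
  fixes B :: "'a::{real_inner,complete_space} \<Rightarrow> 'a set"
  assumes max: "maximally_monotone B" and s: "0 < s"
  shows "\<exists>y. \<exists>b\<in>B y. w = y + s *\<^sub>R b"
proof -
  define M where "M y = (\<lambda>b. s *\<^sub>R b) ` B (y + w)" for y
  have "maximally_monotone M"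
  proof (rule maximally_monotoneI)
    show "monotone_op M"
      unfolding monotone_op_def
    proof (intro allI impI)
      fix x y u v assume "u \<in> M x" "v \<in> M y"
      then obtain b b' where "b \<in> B (x + w)" "b' \<in> B (y + w)" "u = s *\<^sub>R b" "v = s *\<^sub>R b'"
        unfolding M_def by auto
      moreover have "0 \<le> inner (b - b') ((x + w) - (y + w))"
        using maximally_monotoneD[OF max] \<open>b \<in> B (x + w)\<close> \<open>b' \<in> B (y + w)\<close> by blast
      ultimately show "0 \<le> inner (u - v) (x - y)"
        using s by (simp add: scaleR_diff_right[symmetric])
    qed
  next
    fix x u assume related: "\<And>y v. v \<in> M y \<Longrightarrow> 0 \<le> inner (v - u) (y - x)"
    have "u /\<^sub>R s \<in> B (x + w)"
    proof (rule maximally_monotone_memI[OF max])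
      fix y b assume "b \<in> B y"
      then have "s *\<^sub>R b \<in> M (y - w)" unfolding M_def by (simp add: imageI)
      then have "0 \<le> inner (s *\<^sub>R b - u) (y - w - x)" by (rule related)
      moreover have "s *\<^sub>R b - u = s *\<^sub>R (b - u /\<^sub>R s)" using s by (simp add: scaleR_diff_right)
      then have "inner (s *\<^sub>R b - u) (y - w - x) = s * inner (b - u /\<^sub>R s) (y - (x + w))"
        by (simp add: diff_diff_eq add.commute)
      ultimately show "0 \<le> inner (b - u /\<^sub>R s) (y - (x + w))"
        using s by (simp add: zero_le_mult_iff)
    qed
    then show "u \<in> M x" unfolding M_def using s by (auto intro: image_eqI[of _ _ "u /\<^sub>R s"])
  qed
  then obtain x where "- x \<in> M x" using minty_zero by blast
  then obtain b where "b \<in> B (x + w)" "- x = s *\<^sub>R b" unfolding M_def by auto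
  then show ?thesis by (metis add.commute add_minus_cancel)
qed

lemma resolvent_mem:
  fixes B :: "'a::{real_inner,complete_space} \<Rightarrow> 'a set"
  assumes max: "maximally_monotone B" and s: "0 < s"
  shows "(w - resolvent s B w) /\<^sub>R s \<in> B (resolvent s B w)"
proof -
  obtain y b where b: "b \<in> B y" "w = y + s *\<^sub>R b" using minty[OF max s] by blast
  have "resolvent s B w = y"
    unfolding resolvent_def
  proof (rule the_equality)
    show "\<exists>b\<in>B y. w = y + s *\<^sub>R b" using b by blast
    fix y' assume "\<exists>b'\<in>B y'. w = y' + s *\<^sub>R b'"
    then obtain b' where b': "b' \<in> B y'" "w = y' + s *\<^sub>R b'" by blast
    then have diff: "y' - y = s *\<^sub>R (b - b')" using b(2) by (simp add: algebra_simps)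
    have "0 \<le> inner (b' - b) (y' - y)" using maximally_monotoneD[OF max b'(1) b(1)] .
    also have "inner (b' - b) (y' - y) = - s * (norm (b - b'))\<^sup>2"
      unfolding diff power2_norm_eq_inner
      by (simp add: inner_diff_left inner_diff_right inner_commute algebra_simps)
    finally have "b = b'" using s by (simp add: mult_le_0_iff)
    with diff show "y' = y" by simp
  qed
  with b s show ?thesis by simp
qed

lemma fb_point_mem:
  fixes B :: "'a::{real_inner,complete_space} \<Rightarrow> 'a set"
  assumes "maximally_monotone B" "0 < s"
  shows "(x - fb_point A B s x) /\<^sub>R s - A x \<in> B (fb_point A B s x)"
  using resolvent_mem[OF assms, of "x - s *\<^sub>R A x"] assms(2)
  unfolding fb_point_def by (simp add: algebra_simps)

lemma fb_residual_mono:
  fixes B :: "'a::{real_inner,complete_space} \<Rightarrow> 'a set"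
  assumes max: "maximally_monotone B" and st: "0 < s" "s \<le> t"
  shows "norm (x - fb_point A B s x) \<le> norm (x - fb_point A B t x) \<and>
    s * norm (x - fb_point A B t x) \<le> t * norm (x - fb_point A B s x)"
proof -
  define u where "u = x - fb_point A B s x"
  define v where "v = x - fb_point A B t x"
  have t: "0 < t" using st by simp
  have scale: "(s * t) *\<^sub>R (u /\<^sub>R s - v /\<^sub>R t) = t *\<^sub>R u - s *\<^sub>R v"
    using st t by (simp add: scaleR_diff_right field_simps)
  have "0 \<le> inner ((u /\<^sub>R s - A x) - (v /\<^sub>R t - A x)) (fb_point A B s x - fb_point A B t x)"
    using maximally_monotoneD[OF max fb_point_mem[OF max st(1)] fb_point_mem[OF max t]]
    unfolding u_def v_def .
  then have "0 \<le> inner (u /\<^sub>R s - v /\<^sub>R t) (v - u)"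
    unfolding u_def v_def by simp
  then have "0 \<le> inner (t *\<^sub>R u - s *\<^sub>R v) (v - u)"
    unfolding scale[symmetric] inner_scaleR_left using st t by simp
  also have "\<dots> = (s + t) * inner u v - t * (norm u)\<^sup>2 - s * (norm v)\<^sup>2"
    unfolding power2_norm_eq_inner by (simp add: inner_diff_left inner_diff_right inner_commute algebra_simps)
  finally have "t * (norm u)\<^sup>2 + s * (norm v)\<^sup>2 \<le> (s + t) * (norm u * norm v)"
    using mult_left_mono[OF norm_cauchy_schwarz[of u v], of "s + t"] st by linarith
  then have product: "(norm u - norm v) * (t * norm u - s * norm v) \<le> 0"
    by (simp add: algebra_simps power2_eq_square)
  have "norm u \<le> norm v"
  proof (rule ccontr)
    assume "\<not> norm u \<le> norm v"
    then have "s * norm v < s * norm u" using st by simp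
    also have "\<dots> \<le> t * norm u" using st by (simp add: mult_right_mono)
    finally have "s * norm v < t * norm u" .
    with \<open>\<not> norm u \<le> norm v\<close> product show False by (simp add: mult_le_0_iff)
  qed
  moreover have "s * norm v \<le> t * norm u"
  proof (rule ccontr)
    assume "\<not> s * norm v \<le> t * norm u"
    moreover have "s * norm u \<le> t * norm u" using st by (simp add: mult_right_mono)
    ultimately have "s * norm u < s * norm v" by linarith
    then have "norm u < norm v" using st by simp
    with \<open>\<not> s * norm v \<le> t * norm u\<close> product show False by (simp add: mult_le_0_iff)
  qed
  ultimately show ?thesis unfolding u_def v_def by blast
qed

lemma cocoercive_imp_monotone:
  assumes "0 \<le> \<beta>" "cocoercive \<beta> T"
  shows "0 \<le> inner (T x - T y) (x - y)"
  using assms unfolding cocoercive_def by (meson order_trans zero_le_mult_iff zero_le_power2)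

lemma cocoercive_imp_lipschitz:
  assumes "0 < \<beta>" "cocoercive \<beta> T"
  shows "(1 / \<beta>)-lipschitz_on UNIV T"
proof (rule lipschitz_onI)
  fix x y
  have "\<beta> * (norm (T x - T y))\<^sup>2 \<le> norm (T x - T y) * norm (x - y)"
    using assms(2) norm_cauchy_schwarz[of "T x - T y" "x - y"] unfolding cocoercive_def
    by (meson order_trans)
  then have "\<beta> * norm (T x - T y) \<le> norm (x - y)"
    by (cases "T x = T y") (auto simp: power2_eq_square mult.left_commute)
  with assms(1) show "dist (T x) (T y) \<le> 1 / \<beta> * dist x y"
    by (simp add: dist_norm field_simps)
qed (use assms in simp)

lemma mem_zer_sum_iff: "z \<in> zer_sum A B \<longleftrightarrow> - A z \<in> B z"
  unfolding zer_sum_def by (auto simp: add_eq_0_iff)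

lemma maximally_monotone_closed_graph:
  assumes max: "maximally_monotone B" and mem: "\<And>n. b n \<in> B (y n)"
    and lim: "y \<longlonglongrightarrow> p" "b \<longlonglongrightarrow> q"
  shows "q \<in> B p"
proof (rule maximally_monotone_memI[OF max])
  fix y' v assume "v \<in> B y'"
  have "(\<lambda>n. inner (v - b n) (y' - y n)) \<longlonglongrightarrow> inner (v - q) (y' - p)"
    by (intro tendsto_intros lim)
  moreover have "0 \<le> inner (v - b n) (y' - y n)" for n
    using maximally_monotoneD[OF max \<open>v \<in> B y'\<close> mem] .
  ultimately show "0 \<le> inner (v - q) (y' - p)"
    by (intro LIMSEQ_le_const) auto
qed

lemma fb_point_near_minty_solution:
  fixes A :: "'a::{real_inner,complete_space} \<Rightarrow> 'a" and B :: "'a \<Rightarrow> 'a set"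
  assumes max: "maximally_monotone B" and s: "0 < s"
    and vi: "\<And>y b. b \<in> B y \<Longrightarrow> 0 \<le> inner (A y + b) (y - z)"
  shows "norm (fb_point A B s z - z) \<le> s * norm (A (fb_point A B s z) - A z)"
proof (cases "fb_point A B s z = z")
  case False
  define y where "y = fb_point A B s z"
  define b where "b = (z - y) /\<^sub>R s - A z"
  have "A y + b = (A y - A z) - (y - z) /\<^sub>R s"
    unfolding b_def by (simp add: algebra_simps scaleR_diff_right)
  then have "inner (A y + b) (y - z) = inner (A y - A z) (y - z) - (norm (y - z))\<^sup>2 / s"
    by (simp only: inner_diff_left inner_scaleR_left power2_norm_eq_inner divide_inverse_commute)
  moreover have "0 \<le> inner (A y + b) (y - z)"
    using vi fb_point_mem[OF max s] unfolding b_def y_def by blast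
  ultimately have "norm (y - z) * (norm (y - z) / s) \<le> norm (y - z) * norm (A y - A z)"
    using norm_cauchy_schwarz[of "A y - A z" "y - z"]
    by (simp add: power2_eq_square mult.commute)
  then have "norm (y - z) / s \<le> norm (A y - A z)"
    by (rule mult_left_le_imp_le) (use False in \<open>simp add: y_def\<close>)
  with s show ?thesis unfolding y_def by (simp add: pos_divide_le_eq mult.commute)
qed simp

lemma zer_sum_if_minty_variational:
  fixes A :: "'a::{real_inner,complete_space} \<Rightarrow> 'a" and B :: "'a \<Rightarrow> 'a set"
  assumes uc: "uniformly_continuous_on UNIV A" and max: "maximally_monotone B"
    and vi: "\<And>y b. b \<in> B y \<Longrightarrow> 0 \<le> inner (A y + b) (y - z)"
  shows "z \<in> zer_sum A B"
proof -
  obtain C where C: "0 < C" "\<And>u v. norm (A u - A v) \<le> C * (1 + norm (u - v))"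
    using uniformly_continuous_linear_growth[OF uc] by blast
  define s where "s n = inverse (real (Suc n)) / (2 * C)" for n
  define y where "y n = fb_point A B (s n) z" for n
  define b where "b n = (z - y n) /\<^sub>R s n - A z" for n
  have sC: "s n * C = inverse (real (Suc n)) / 2" for n
    unfolding s_def using C(1) by simp
  have s: "0 < s n" "s n * C \<le> 1 / 2" for n
    using sC[of n] C(1) inverse_le_1_iff[of "real (Suc n)"] unfolding s_def by simp_all
  have step: "norm (y n - z) \<le> s n * norm (A (y n) - A z)" for n
    unfolding y_def using max s(1) vi by (rule fb_point_near_minty_solution)
  have "norm (y n - z) \<le> inverse (real (Suc n))" for n
  proof -
    have "norm (y n - z) \<le> s n * C + (s n * C) * norm (y n - z)"
      using order_trans[OF step mult_left_mono[OF C(2) less_imp_le[OF s(1)]]]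
      by (simp add: algebra_simps)
    also have "\<dots> \<le> s n * C + norm (y n - z) / 2"
      using mult_right_mono[OF s(2)[of n] norm_ge_zero[of "y n - z"]] by simp
    finally show ?thesis using sC[of n] by linarith
  qed
  then have "(\<lambda>n. y n - z) \<longlonglongrightarrow> 0"
    by (intro Lim_null_comparison[OF _ LIMSEQ_inverse_real_of_nat]) simp
  then have y: "y \<longlonglongrightarrow> z" by (rule LIM_zero_cancel)
  have "(\<lambda>n. A (y n)) \<longlonglongrightarrow> A z"
    using uniformly_continuous_imp_continuous[OF uc] y by (rule continuous_on_tendsto_compose) auto
  then have A_lim: "(\<lambda>n. norm (A (y n) - A z)) \<longlonglongrightarrow> 0" by (simp add: LIM_zero tendsto_norm_zero)
  have "(\<lambda>n. b n - - A z) \<longlonglongrightarrow> 0"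
  proof (rule Lim_null_comparison[OF _ A_lim])
    have "norm (b n - - A z) \<le> norm (A (y n) - A z)" for n
    proof -
      have "norm (b n - - A z) = norm (y n - z) / s n"
        unfolding b_def using s(1)[of n] by (simp add: norm_minus_commute divide_inverse_commute)
      also have "\<dots> \<le> norm (A (y n) - A z)"
        using step[of n] s(1)[of n] by (simp add: pos_divide_le_eq mult.commute)
      finally show ?thesis .
    qed
    then show "\<forall>\<^sub>F n in sequentially. norm (b n - - A z) \<le> norm (A (y n) - A z)"
      by (intro always_eventually allI)
  qed
  then have "b \<longlonglongrightarrow> - A z" by (rule LIM_zero_cancel)
  moreover have "b n \<in> B (y n)" for n
    unfolding b_def y_def by (rule fb_point_mem[OF max s(1)])
  ultimately have "- A z \<in> B z"
    using max y by (intro maximally_monotone_closed_graph) auto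
  then show ?thesis by (simp only: mem_zer_sum_iff)
qed

section \<open>The line search\<close>

lemma norm_lt_if_sq_lt_inner:
  fixes v w :: "'a::real_inner"
  assumes "\<delta> * (norm v)\<^sup>2 < s * inner w v" "0 \<le> s"
  shows "\<delta> * norm v < s * norm w"
proof -
  have "norm v * (\<delta> * norm v) < norm v * (s * norm w)"
    using assms mult_left_mono[OF norm_cauchy_schwarz[of w v] assms(2)]
    by (simp add: power2_eq_square algebra_simps)
  then show ?thesis by (rule mult_left_less_imp_less) simp
qed

lemma tendsto_if_bounded_violation:
  fixes f :: "'a::real_normed_vector \<Rightarrow> 'b::real_normed_vector"
  assumes uc: "uniformly_continuous_on UNIV f" and \<delta>: "0 < \<delta>"
    and s: "s \<longlonglongrightarrow> 0" "\<And>j. 0 \<le> s j"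
    and violated: "\<And>j. \<delta> * norm (x - z j) \<le> s j * norm (f x - f (z j))"
    and bounded: "\<And>j. norm (x - z j) \<le> R"
  shows "z \<longlonglongrightarrow> x"
proof -
  obtain C where C: "0 < C" "\<And>u v. norm (f u - f v) \<le> C * (1 + norm (u - v))"
    using uniformly_continuous_linear_growth[OF uc] by blast
  have "(\<lambda>j. z j - x) \<longlonglongrightarrow> 0"
  proof (rule Lim_null_comparison)
    have "\<delta> * norm (z j - x) \<le> s j * (C * (1 + R))" for j
    proof -
      have "C * (1 + norm (x - z j)) \<le> C * (1 + R)"
        using bounded[of j] C(1) by (intro mult_left_mono) auto
      with C(2)[of x "z j"] have "s j * norm (f x - f (z j)) \<le> s j * (C * (1 + R))"
        using s(2)[of j] by (intro mult_left_mono) auto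
      with violated[of j] show ?thesis by (simp add: norm_minus_commute)
    qed
    then show "\<forall>\<^sub>F j in sequentially. norm (z j - x) \<le> s j * (C * (1 + R)) / \<delta>"
      using \<delta> by (intro always_eventually allI) (simp add: field_simps)
    have "(\<lambda>j. s j * (C * (1 + R)) / \<delta>) \<longlonglongrightarrow> 0 * (C * (1 + R)) / \<delta>"
      using \<delta> s(1) by (intro tendsto_intros) auto
    then show "(\<lambda>j. s j * (C * (1 + R)) / \<delta>) \<longlonglongrightarrow> 0" by simp
  qed
  then show ?thesis by (rule LIM_zero_cancel)
qed

lemma line_search_terminates:
  fixes B :: "'a::{real_inner,complete_space} \<Rightarrow> 'a set"
  assumes max: "maximally_monotone B" and \<theta>: "0 < \<theta>" "\<theta> < 1" and \<delta>: "0 < \<delta>" and \<alpha>: "0 < \<alpha>"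
    and uc: "uniformly_continuous_on UNIV A2"
  shows "\<exists>j. let s = \<alpha> * \<theta> ^ j; z = fb_point A B s x in
    s * inner (A2 x - A2 z) (x - z) \<le> \<delta> * (norm (x - z))\<^sup>2"
proof (rule ccontr)
  define s where "s j = \<alpha> * \<theta> ^ j" for j
  define z where "z j = fb_point A B (s j) x" for j
  assume "\<not> ?thesis"
  then have "\<delta> * (norm (x - z j))\<^sup>2 < s j * inner (A2 x - A2 (z j)) (x - z j)" for j
    unfolding s_def z_def Let_def by (simp add: not_le)
  moreover have s_pos: "0 < s j" for j unfolding s_def using \<theta> \<alpha> by simp
  ultimately have violated: "\<delta> * norm (x - z j) < s j * norm (A2 x - A2 (z j))" for j
    by (intro norm_lt_if_sq_lt_inner less_imp_le)
  define R where "R = norm (x - z 0)"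
  have "0 < R" unfolding R_def using violated[of 0] \<delta> by (cases "z 0 = x") auto
  have "s j \<le> s 0" for j unfolding s_def using \<theta> \<alpha> by (simp add: power_le_one)
  then have z_le: "norm (x - z j) \<le> R" and z_ge: "s j * R \<le> \<alpha> * norm (x - z j)" for j
    using fb_residual_mono[OF max s_pos] unfolding R_def z_def by (auto simp: s_def)
  have "s \<longlonglongrightarrow> \<alpha> * 0" unfolding s_def using \<theta> by (intro tendsto_intros LIMSEQ_power_zero) auto
  then have "z \<longlonglongrightarrow> x"
    using uc \<delta> s_pos violated z_le by (intro tendsto_if_bounded_violation[of A2 \<delta> s]) (auto intro: less_imp_le)
  then have "(\<lambda>j. norm (A2 x - A2 (z j))) \<longlonglongrightarrow> norm (A2 x - A2 x)"
    using uniformly_continuous_imp_continuous[OF uc]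
    by (intro tendsto_intros) (auto intro: continuous_on_tendsto_compose)
  moreover have "\<delta> * R / \<alpha> \<le> norm (A2 x - A2 (z j))" for j
  proof -
    have "s j * (\<delta> * R / \<alpha>) \<le> \<delta> * norm (x - z j)"
      using z_ge[of j] \<alpha> \<delta> by (simp add: field_simps mult_left_mono)
    also have "\<dots> < s j * norm (A2 x - A2 (z j))" by (rule violated)
    finally have "s j * (\<delta> * R / \<alpha>) < s j * norm (A2 x - A2 (z j))" .
    with s_pos[of j] show ?thesis by (meson less_imp_le mult_left_less_imp_less)
  qed
  ultimately have "\<delta> * R / \<alpha> \<le> 0" by (intro LIMSEQ_le_const) auto
  with \<open>0 < R\<close> \<delta> \<alpha> show False by (simp add: divide_le_0_iff mult_le_0_iff)
qed

section \<open>Convergence of Method 2\<close>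

locale method2 =
  fixes A1 A2 :: "'a::{real_inner,complete_space} \<Rightarrow> 'a" and B :: "'a \<Rightarrow> 'a set"
    and \<beta> \<theta> \<delta> \<delta>b \<alpha>0 :: real and x :: "nat \<Rightarrow> 'a" and alpha :: "nat \<Rightarrow> real"
  assumes \<beta>: "0 < \<beta>" and A1_cocoercive: "cocoercive \<beta> A1"
    and A2_max: "maximally_monotone (\<lambda>u. {A2 u})" and A2_uc: "uniformly_continuous_on UNIV A2"
    and B_max: "maximally_monotone B"
    and \<theta>: "0 < \<theta>" "\<theta> < 1" and \<delta>: "0 < \<delta>" and \<delta>b: "0 < \<delta>b" and \<delta>_sum: "0 < 1 - \<delta> - \<delta>b"
    and \<alpha>0: "0 < \<alpha>0" "\<alpha>0 \<le> 4 * \<beta> * \<delta>b"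
    and zeros: "zer_sum (\<lambda>u. A1 u + A2 u) B \<noteq> {}" "closed (zer_sum (\<lambda>u. A1 u + A2 u) B)"
      "convex (zer_sum (\<lambda>u. A1 u + A2 u) B)"
    and method2: "method2_seq A1 A2 B \<theta> \<delta> \<delta>b \<alpha>0 x alpha"
begin

abbreviation "A \<equiv> \<lambda>u. A1 u + A2 u"
abbreviation "Z \<equiv> zer_sum A B"

text \<open>\<open>stepsize k\<close>, \<open>xfb k\<close> and \<open>C k\<close> are the paper's \<open>\<alpha>\<^sub>k\<close>, \<open>x\<^sup>k\<close>-bar and
  \<open>T\<^sub>k \<inter> \<Gamma>\<^sub>k\<close>; the sequence \<open>alpha\<close> is shifted by one.\<close>

definition "J k = ls_index A1 A2 B \<theta> \<delta> (alpha k) (x k)"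
definition "stepsize k = alpha (Suc k)"
definition "xfb k = fb_point A B (stepsize k) (x k)"
definition "C k = T_set A2 \<delta>b (stepsize k) (x k) (xfb k) \<inter> Gamma_set (x 0) (x k)"

lemma alpha_0: "alpha 0 = \<alpha>0"
  and alpha_Suc: "alpha (Suc k) = alpha k * \<theta> ^ J k"
  and x_Suc: "x (Suc k) = proj (C k) (x 0)"
  using method2 unfolding method2_seq_def J_def C_def xfb_def stepsize_def Let_def by auto

lemma alpha_bounds: "0 < alpha k \<and> alpha k \<le> \<alpha>0"
proof (induction k)
  case 0 then show ?case using alpha_0 \<alpha>0 by simp
next
  case (Suc k)
  have "0 < \<theta> ^ J k" "\<theta> ^ J k \<le> 1" using \<theta> by (simp_all add: power_le_one)
  with Suc show ?case unfolding alpha_Suc by (simp add: mult_le_one order_trans[OF mult_left_le])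
qed

lemma stepsize_pos: "0 < stepsize k" and stepsize_le: "stepsize k \<le> 4 * \<beta> * \<delta>b"
  using alpha_bounds[of "Suc k"] \<alpha>0 unfolding stepsize_def by auto

lemma A_uniformly_continuous: "uniformly_continuous_on UNIV A"
  using lipschitz_on_uniformly_continuous[OF cocoercive_imp_lipschitz[OF \<beta> A1_cocoercive]] A2_uc
  by (rule uniformly_continuous_on_add)

lemma A2_monotone: "0 \<le> inner (A2 u - A2 v) (u - v)"
  using maximally_monotoneD[OF A2_max] by simp

lemma sum_monotone:
  assumes "b \<in> B y" "b' \<in> B y'"
  shows "0 \<le> inner ((A y + b) - (A y' + b')) (y - y')"
proof -
  have split: "(A y + b) - (A y' + b') = (A1 y - A1 y') + (A2 y - A2 y') + (b - b')" by simp
  show ?thesis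
    using cocoercive_imp_monotone[OF less_imp_le[OF \<beta>] A1_cocoercive, of y y'] A2_monotone[of y y']
      maximally_monotoneD[OF B_max assms]
    unfolding split inner_add_left by linarith
qed

lemma xfb_mem: "(x k - xfb k) /\<^sub>R stepsize k - A (x k) \<in> B (xfb k)"
  unfolding xfb_def by (rule fb_point_mem[OF B_max stepsize_pos])

lemma line_search_accepts:
  "stepsize k * inner (A2 (x k) - A2 (xfb k)) (x k - xfb k) \<le> \<delta> * (norm (x k - xfb k))\<^sup>2"
proof -
  let ?test = "\<lambda>j. let s = alpha k * \<theta> ^ j; z = fb_point A B s (x k) in
    s * inner (A2 (x k) - A2 z) (x k - z) \<le> \<delta> * (norm (x k - z))\<^sup>2"
  have "\<exists>j. ?test j"
    using line_search_terminates[OF B_max \<theta> \<delta> alpha_bounds[THEN conjunct1] A2_uc] .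
  then have "?test (LEAST j. ?test j)" by (rule LeastI_ex)
  then show ?thesis
    unfolding stepsize_def xfb_def alpha_Suc J_def ls_index_def Let_def .
qed

lemma line_search_backtracked:
  assumes "0 < J k"
  obtains s where "stepsize k = \<theta> * s" "0 < s"
    "\<delta> * norm (x k - fb_point A B s (x k)) < s * norm (A2 (x k) - A2 (fb_point A B s (x k)))"
proof -
  define s where "s = alpha k * \<theta> ^ (J k - 1)"
  let ?test = "\<lambda>j. let s = alpha k * \<theta> ^ j; z = fb_point A B s (x k) in
    s * inner (A2 (x k) - A2 z) (x k - z) \<le> \<delta> * (norm (x k - z))\<^sup>2"
  have J: "J k = (LEAST j. ?test j)" unfolding J_def ls_index_def ..
  have "J k - 1 < J k" using assms by simp
  then have "\<not> ?test (J k - 1)" unfolding J by (rule not_less_Least)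
  moreover have "0 < s" unfolding s_def using alpha_bounds[of k] \<theta> by simp
  ultimately have "\<delta> * norm (x k - fb_point A B s (x k)) < s * norm (A2 (x k) - A2 (fb_point A B s (x k)))"
    unfolding s_def Let_def by (intro norm_lt_if_sq_lt_inner) (auto simp: not_le)
  moreover have "stepsize k = \<theta> * s"
    using assms unfolding stepsize_def alpha_Suc s_def by (simp add: power_eq_if)
  ultimately show ?thesis using that \<open>0 < s\<close> by blast
qed

lemma zeros_subset_T: "Z \<subseteq> T_set A2 \<delta>b (stepsize k) (x k) (xfb k)"
proof
  fix z assume "z \<in> Z"
  then have bz: "- A z \<in> B z" by (simp only: mem_zer_sum_iff)
  define d where "d = x k - xfb k"
  define b where "b = d /\<^sub>R stepsize k - A (x k)"
  define g where "g = A1 (x k) - A1 z"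
  have b: "b \<in> B (xfb k)" using xfb_mem unfolding b_def d_def .
  have split: "d /\<^sub>R stepsize k - (A2 (x k) - A2 (xfb k)) = (b - - A z) + g + (A2 (xfb k) - A2 z)"
    unfolding b_def g_def by (simp add: algebra_simps)
  have "inner (b - - A z) (z - xfb k) \<le> 0"
    using maximally_monotoneD[OF B_max b bz] by (simp add: inner_diff_right)
  moreover have "inner (A2 (xfb k) - A2 z) (z - xfb k) \<le> 0"
    using A2_monotone[of "xfb k" z] by (simp add: inner_diff_right)
  moreover have "inner g (z - xfb k) \<le> (norm d)\<^sup>2 / (4 * \<beta>)"
  proof -
    have "inner g (z - xfb k) = - inner g (x k - z) + inner g d"
      unfolding d_def by (simp add: inner_diff_right)
    also have "\<dots> \<le> - \<beta> * (norm g)\<^sup>2 + norm g * norm d"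
      using A1_cocoercive norm_cauchy_schwarz[of g d] unfolding cocoercive_def g_def
      by (metis add_mono neg_le_iff_le mult_minus_left)
    also have "\<dots> \<le> (norm d)\<^sup>2 / (4 * \<beta>)"
    proof -
      have "0 \<le> (2 * \<beta> * norm g - norm d)\<^sup>2" by simp
      then show ?thesis using \<beta> by (simp add: field_simps power2_eq_square)
    qed
    finally show ?thesis .
  qed
  moreover have "(norm d)\<^sup>2 / (4 * \<beta>) \<le> (\<delta>b / stepsize k) * (norm d)\<^sup>2"
  proof -
    have "1 / (4 * \<beta>) \<le> \<delta>b / stepsize k"
      using stepsize_pos[of k] stepsize_le[of k] \<beta> by (simp add: field_simps)
    then show ?thesis using mult_right_mono[of _ _ "(norm d)\<^sup>2"] by fastforce
  qed
  ultimately have "inner (d /\<^sub>R stepsize k - (A2 (x k) - A2 (xfb k))) (z - xfb k) \<le> (\<delta>b / stepsize k) * (norm d)\<^sup>2"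
    unfolding split inner_add_left by linarith
  then show "z \<in> T_set A2 \<delta>b (stepsize k) (x k) (xfb k)"
    unfolding T_set_def d_def by (simp add: divide_inverse_commute)
qed

lemma C_closed_convex: "closed (C k)" "convex (C k)"
  unfolding C_def T_set_def Gamma_set_def shifted_halfspace_eq
  by (intro closed_Int convex_Int closed_halfspace_le convex_halfspace_le)+

lemma zeros_subset_Gamma: "Z \<subseteq> Gamma_set (x 0) (x k)"
proof (induction k)
  case 0 show ?case unfolding Gamma_set_def by simp
next
  case (Suc k)
  with zeros_subset_T have "Z \<subseteq> C k" unfolding C_def by blast
  with zeros(1) have "C k \<noteq> {}" by blast
  with \<open>Z \<subseteq> C k\<close> show ?case
    using proj_inner_le[OF C_closed_convex] unfolding x_Suc Gamma_set_def by blast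
qed

lemma zeros_subset_C: "Z \<subseteq> C k"
  using zeros_subset_T zeros_subset_Gamma unfolding C_def by blast

lemma C_nonempty: "C k \<noteq> {}"
  using zeros_subset_C zeros(1) by blast

lemma x_Suc_in_C: "x (Suc k) \<in> C k"
  unfolding x_Suc using proj_in[OF C_closed_convex C_nonempty] .

definition "xbar = proj Z (x 0)"
definition "L = lim (\<lambda>k. norm (x 0 - x k))"

lemma xbar_in_zeros: "xbar \<in> Z"
  unfolding xbar_def using proj_in[OF zeros(2,3,1)] .

lemma dist_x0_le_xbar: "norm (x 0 - x k) \<le> norm (x 0 - xbar)"
proof (cases k)
  case (Suc j)
  have "xbar \<in> C j" using xbar_in_zeros zeros_subset_C by blast
  then have "(norm (x 0 - x k))\<^sup>2 \<le> (norm (x 0 - xbar))\<^sup>2"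
    using proj_pythagoras[OF C_closed_convex C_nonempty, of xbar j "x 0"] zero_le_power2[of "norm (xbar - x k)"]
    unfolding Suc x_Suc by linarith
  then show ?thesis by (rule power2_le_imp_le) simp
qed simp

lemma dist_x0_Suc: "(norm (x 0 - x k))\<^sup>2 + (norm (x (Suc k) - x k))\<^sup>2 \<le> (norm (x 0 - x (Suc k)))\<^sup>2"
  using x_Suc_in_C[of k] unfolding C_def Gamma_set_def by (intro obtuse_pythagoras) auto

lemma dist_x0_tendsto: "(\<lambda>k. norm (x 0 - x k)) \<longlonglongrightarrow> L"
  and dist_x0_le_L: "norm (x 0 - x k) \<le> L"
proof -
  have "incseq (\<lambda>k. norm (x 0 - x k))"
  proof (rule incseq_SucI)
    fix k
    have "(norm (x 0 - x k))\<^sup>2 \<le> (norm (x 0 - x (Suc k)))\<^sup>2"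
      using dist_x0_Suc[of k] zero_le_power2[of "norm (x (Suc k) - x k)"] by linarith
    then show "norm (x 0 - x k) \<le> norm (x 0 - x (Suc k))" by (rule power2_le_imp_le) simp
  qed
  then obtain L' where "(\<lambda>k. norm (x 0 - x k)) \<longlonglongrightarrow> L'" "\<And>k. norm (x 0 - x k) \<le> L'"
    using incseq_convergent[of _ "norm (x 0 - xbar)"] dist_x0_le_xbar by blast
  moreover from this(1) have "L = L'" unfolding L_def by (rule limI)
  ultimately show "(\<lambda>k. norm (x 0 - x k)) \<longlonglongrightarrow> L" "norm (x 0 - x k) \<le> L" by auto
qed

lemma steps_tendsto_zero: "(\<lambda>k. norm (x (Suc k) - x k)) \<longlonglongrightarrow> 0"
proof (rule tendsto_norm_zero[OF Lim_null_comparison])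
  show "\<forall>\<^sub>F k in sequentially. norm (x (Suc k) - x k)
      \<le> sqrt ((norm (x 0 - x (Suc k)))\<^sup>2 - (norm (x 0 - x k))\<^sup>2)"
    using dist_x0_Suc by (intro always_eventually allI real_le_rsqrt) (simp add: algebra_simps)
  have "(\<lambda>k. sqrt ((norm (x 0 - x (Suc k)))\<^sup>2 - (norm (x 0 - x k))\<^sup>2)) \<longlonglongrightarrow> sqrt (L\<^sup>2 - L\<^sup>2)"
    by (intro tendsto_intros dist_x0_tendsto LIMSEQ_Suc[OF dist_x0_tendsto])
  then show "(\<lambda>k. sqrt ((norm (x 0 - x (Suc k)))\<^sup>2 - (norm (x 0 - x k))\<^sup>2)) \<longlonglongrightarrow> 0" by simp
qed

lemma residual_bound:
  "(1 - \<delta> - \<delta>b) * (norm (x k - xfb k))\<^sup>2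
    \<le> (norm (x k - xfb k) + stepsize k * norm (A2 (x k) - A2 (xfb k))) * norm (x (Suc k) - x k)"
proof -
  define a where "a = stepsize k"
  define d where "d = x k - xfb k"
  define u where "u = d /\<^sub>R a - (A2 (x k) - A2 (xfb k))"
  have a: "0 < a" unfolding a_def by (rule stepsize_pos)
  have "inner u (x (Suc k) - xfb k) \<le> (\<delta>b / a) * (norm d)\<^sup>2"
    using x_Suc_in_C[of k] unfolding C_def T_set_def u_def d_def a_def by (simp add: divide_inverse_commute)
  then have T: "a * inner u (x (Suc k) - xfb k) \<le> \<delta>b * (norm d)\<^sup>2"
    using a by (simp add: field_simps)
  have accept: "a * inner (A2 (x k) - A2 (xfb k)) d \<le> \<delta> * (norm d)\<^sup>2"
    using line_search_accepts[of k] unfolding a_def d_def .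
  have "a * inner u d = (norm d)\<^sup>2 - a * inner (A2 (x k) - A2 (xfb k)) d"
    unfolding u_def using a by (simp add: inner_diff_left power2_norm_eq_inner algebra_simps)
  moreover have "x k - x (Suc k) = d - (x (Suc k) - xfb k)" unfolding d_def by simp
  then have "a * inner u (x k - x (Suc k)) = a * inner u d - a * inner u (x (Suc k) - xfb k)"
    by (simp add: inner_diff_right algebra_simps)
  ultimately have "(1 - \<delta> - \<delta>b) * (norm d)\<^sup>2 \<le> a * inner u (x k - x (Suc k))"
    using T accept by (simp add: algebra_simps)
  also have "\<dots> \<le> a * norm u * norm (x (Suc k) - x k)"
    using mult_left_mono[OF norm_cauchy_schwarz[of u "x k - x (Suc k)"]] a
    by (simp add: norm_minus_commute mult.assoc)
  also have "\<dots> \<le> (norm d + a * norm (A2 (x k) - A2 (xfb k))) * norm (x (Suc k) - x k)"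
  proof (rule mult_right_mono)
    have "a * norm u \<le> a * (norm (d /\<^sub>R a) + norm (A2 (x k) - A2 (xfb k)))"
      unfolding u_def using a by (intro mult_left_mono norm_triangle_ineq4) auto
    also have "\<dots> = norm d + a * norm (A2 (x k) - A2 (xfb k))"
      using a by (simp add: distrib_left abs_of_pos)
    finally show "a * norm u \<le> norm d + a * norm (A2 (x k) - A2 (xfb k))" .
  qed simp
  finally show ?thesis unfolding a_def d_def .
qed

lemma residual_tendsto_zero: "(\<lambda>k. norm (x k - xfb k)) \<longlonglongrightarrow> 0"
proof -
  obtain G where G: "0 < G" "\<And>u v. norm (A2 u - A2 v) \<le> G * (1 + norm (u - v))"
    using uniformly_continuous_linear_growth[OF A2_uc] by blast
  show ?thesis
  proof (rule tendsto_zero_if_sq_le_linear[OF \<delta>_sum _ _ steps_tendsto_zero])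
    fix k
    have "stepsize k * norm (A2 (x k) - A2 (xfb k)) \<le> 4 * \<beta> * \<delta>b * (G * (1 + norm (x k - xfb k)))"
      using G stepsize_pos[of k] stepsize_le[of k] by (intro mult_mono) auto
    then have "norm (x k - xfb k) + stepsize k * norm (A2 (x k) - A2 (xfb k))
        \<le> (1 + 4 * \<beta> * \<delta>b * G) * (1 + norm (x k - xfb k))"
      by (simp add: algebra_simps)
    from mult_right_mono[OF this norm_ge_zero[of "x (Suc k) - x k"]] residual_bound[of k]
    show "(1 - \<delta> - \<delta>b) * (norm (x k - xfb k))\<^sup>2
        \<le> (1 + 4 * \<beta> * \<delta>b * G) * (1 + norm (x k - xfb k)) * norm (x (Suc k) - x k)"
      by linarith
  qed (use \<beta> \<delta>b G in auto)
qed

lemma residual_eventually_lt: "0 < r \<Longrightarrow> \<exists>k1. \<forall>k\<ge>k1. norm (x k - xfb k) < r"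
  using LIMSEQ_D[OF residual_tendsto_zero] by fastforce

lemma residual_small_relative_if_backtracked:
  assumes "0 < J k"
    and \<eta>: "\<And>u v. norm (u - v) < \<eta> \<Longrightarrow> norm (A2 u - A2 v) < \<epsilon> * \<delta> * \<theta>"
    and small: "norm (x k - xfb k) < \<eta> * \<theta>"
  shows "norm (x k - xfb k) \<le> \<epsilon> * stepsize k"
proof -
  from \<open>0 < J k\<close> obtain s where s: "stepsize k = \<theta> * s" "0 < s"
    and violated: "\<delta> * norm (x k - fb_point A B s (x k)) < s * norm (A2 (x k) - A2 (fb_point A B s (x k)))"
    by (rule line_search_backtracked)
  define z where "z = fb_point A B s (x k)"
  have "stepsize k \<le> s" using s \<theta> by (simp add: mult_le_cancel_right1)
  then have mono: "norm (x k - xfb k) \<le> norm (x k - z)" "stepsize k * norm (x k - z) \<le> s * norm (x k - xfb k)"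
    using fb_residual_mono[OF B_max stepsize_pos] unfolding xfb_def z_def by auto
  then have "\<theta> * norm (x k - z) \<le> norm (x k - xfb k)"
    using s by (simp add: mult.assoc mult.left_commute[of \<theta>])
  also have "\<dots> < \<eta> * \<theta>" by (rule small)
  finally have "norm (x k - z) < \<eta>" using \<theta> by (simp add: mult.commute)
  then have "s * norm (A2 (x k) - A2 z) \<le> s * (\<epsilon> * \<delta> * \<theta>)"
    using \<eta> s(2) by (intro mult_left_mono less_imp_le) auto
  also have "\<dots> = \<delta> * (\<epsilon> * stepsize k)" using s(1) by (simp add: algebra_simps)
  finally have "\<delta> * norm (x k - z) < \<delta> * (\<epsilon> * stepsize k)"
    using violated unfolding z_def[symmetric] by linarith
  with mono(1) \<delta> show ?thesis by simp
qed

lemma residual_small_relative: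
  assumes \<epsilon>: "0 < \<epsilon>"
  shows "\<exists>k\<ge>k0. norm (x k - xfb k) \<le> \<epsilon> * stepsize k"
proof (cases "\<exists>k1. \<forall>k\<ge>k1. J k = 0")
  case True
  then obtain k1 where k1: "\<And>k. k1 \<le> k \<Longrightarrow> J k = 0" by blast
  have const: "stepsize k = stepsize k1" if "k1 \<le> k" for k
    using that
  proof (induction k rule: dec_induct)
    case (step k)
    then show ?case using k1[of "Suc k"] unfolding stepsize_def alpha_Suc[of "Suc k"] by simp
  qed simp
  obtain k2 where k2: "\<And>k. k2 \<le> k \<Longrightarrow> norm (x k - xfb k) < \<epsilon> * stepsize k1"
    using residual_eventually_lt[of "\<epsilon> * stepsize k1"] \<epsilon> stepsize_pos by auto
  define k where "k = max k0 (max k1 k2)"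
  have "norm (x k - xfb k) < \<epsilon> * stepsize k" using k2[of k] const[of k] unfolding k_def by simp
  then show ?thesis unfolding k_def by (intro exI[of _ k]) (auto simp: k_def)
next
  case False
  then have backtracking: "\<exists>k\<ge>k1. 0 < J k" for k1 by auto
  obtain \<eta> where \<eta>: "0 < \<eta>" "\<And>u v. dist u v < \<eta> \<Longrightarrow> dist (A2 u) (A2 v) < \<epsilon> * \<delta> * \<theta>"
    using A2_uc \<epsilon> \<delta> \<theta> unfolding uniformly_continuous_on_def by (metis UNIV_I mult_pos_pos)
  obtain k2 where k2: "\<And>k. k2 \<le> k \<Longrightarrow> norm (x k - xfb k) < \<eta> * \<theta>"
    using residual_eventually_lt[of "\<eta> * \<theta>"] \<eta> \<theta> by auto
  obtain k where k: "max k0 k2 \<le> k" "0 < J k" using backtracking by blast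
  have "norm (x k - xfb k) \<le> \<epsilon> * stepsize k"
    using k(2) \<eta>(2) k2 k(1) by (intro residual_small_relative_if_backtracked) (auto simp: dist_norm)
  with k(1) show ?thesis by auto
qed

lemma approximate_zeros:
  assumes \<epsilon>: "0 < \<epsilon>"
  shows "\<exists>k b. b \<in> B (xfb k) \<and> norm (x k - xfb k) \<le> \<epsilon> \<and> norm (A (xfb k) + b) \<le> \<epsilon>"
proof -
  obtain \<eta> where \<eta>: "0 < \<eta>" "\<And>u v. dist u v < \<eta> \<Longrightarrow> dist (A u) (A v) < \<epsilon> / 2"
    using A_uniformly_continuous \<epsilon> unfolding uniformly_continuous_on_def
    by (metis UNIV_I half_gt_zero)
  obtain k1 where k1: "\<And>k. k1 \<le> k \<Longrightarrow> norm (x k - xfb k) < min \<epsilon> \<eta>"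
    using residual_eventually_lt[of "min \<epsilon> \<eta>"] \<epsilon> \<eta> by auto
  obtain k where k: "k1 \<le> k" "norm (x k - xfb k) \<le> \<epsilon> / 2 * stepsize k"
    using residual_small_relative[of "\<epsilon> / 2" k1] \<epsilon> by auto
  define b where "b = (x k - xfb k) /\<^sub>R stepsize k - A (x k)"
  have eq: "A (xfb k) + b = (x k - xfb k) /\<^sub>R stepsize k - (A (x k) - A (xfb k))"
    unfolding b_def by (simp add: algebra_simps)
  have "norm (A (xfb k) + b) \<le> norm ((x k - xfb k) /\<^sub>R stepsize k) + norm (A (x k) - A (xfb k))"
    unfolding eq by (rule norm_triangle_ineq4)
  also have "\<dots> = norm (x k - xfb k) / stepsize k + norm (A (x k) - A (xfb k))"
    using stepsize_pos[of k] by (simp add: divide_inverse_commute)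
  also have "\<dots> \<le> \<epsilon> / 2 + \<epsilon> / 2"
  proof (rule add_mono)
    show "norm (x k - xfb k) / stepsize k \<le> \<epsilon> / 2"
      using k(2) stepsize_pos[of k] by (simp add: divide_le_eq)
    show "norm (A (x k) - A (xfb k)) \<le> \<epsilon> / 2"
      using \<eta>(2)[of "x k" "xfb k"] k1[OF k(1)] by (simp add: dist_norm)
  qed
  finally have "norm (A (xfb k) + b) \<le> \<epsilon>" by simp
  moreover have "b \<in> B (xfb k)" unfolding b_def by (rule xfb_mem)
  moreover have "norm (x k - xfb k) \<le> \<epsilon>" using k1[OF k(1)] by simp
  ultimately show ?thesis by blast
qed

lemma approximate_minty_point:
  assumes F: "finite F" "F \<subseteq> {(y, b). b \<in> B y}" and \<epsilon>: "0 < \<epsilon>"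
  shows "\<exists>w. dist (x 0) w \<le> L + \<epsilon> \<and>
    (\<forall>p\<in>F. inner (A (fst p) + snd p) w \<le> inner (A (fst p) + snd p) (fst p) + \<epsilon>)"
proof -
  define R where "R = Max (insert 0 ((\<lambda>p. norm (fst p - x 0)) ` F))"
  have R: "norm (fst p - x 0) \<le> R" if "p \<in> F" for p
    using F(1) that unfolding R_def by (intro Max_ge) auto
  have "0 \<le> R" using F(1) unfolding R_def by (intro Max_ge) auto
  moreover have "0 \<le> L" using dist_x0_le_L[of 0] by simp
  ultimately have RL: "1 \<le> R + L + 1" by simp
  define \<epsilon>' where "\<epsilon>' = min 1 (\<epsilon> / (R + L + 1))"
  have \<epsilon>': "0 < \<epsilon>'" "\<epsilon>' \<le> 1" "\<epsilon>' * (R + L + 1) \<le> \<epsilon>"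
  proof -
    show "0 < \<epsilon>'" "\<epsilon>' \<le> 1" unfolding \<epsilon>'_def using \<epsilon> RL by simp_all
    have "\<epsilon>' * (R + L + 1) \<le> \<epsilon> / (R + L + 1) * (R + L + 1)"
      unfolding \<epsilon>'_def using RL by (intro mult_right_mono) auto
    then show "\<epsilon>' * (R + L + 1) \<le> \<epsilon>" using RL by simp
  qed
  have "\<epsilon>' \<le> \<epsilon>' * (R + L + 1)" using \<epsilon>'(1) RL by simp
  with \<epsilon>'(3) have "\<epsilon>' \<le> \<epsilon>" by linarith
  obtain k b where b: "b \<in> B (xfb k)" "norm (x k - xfb k) \<le> \<epsilon>'" "norm (A (xfb k) + b) \<le> \<epsilon>'"
    using approximate_zeros[OF \<epsilon>'(1)] by blast
  define e where "e = A (xfb k) + b"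
  have near: "norm (x 0 - xfb k) \<le> L + \<epsilon>'"
    using norm_triangle_ineq[of "x 0 - x k" "x k - xfb k"] dist_x0_le_L[of k] b(2) by simp
  show ?thesis
  proof (intro exI conjI ballI)
    show "dist (x 0) (xfb k) \<le> L + \<epsilon>" using near \<open>\<epsilon>' \<le> \<epsilon>\<close> by (simp add: dist_norm)
    fix p assume "p \<in> F"
    then obtain y v where p: "p = (y, v)" "v \<in> B y" using F(2) by auto
    have "norm (y - xfb k) \<le> norm (y - x 0) + norm (x 0 - xfb k)"
      using norm_triangle_ineq[of "y - x 0" "x 0 - xfb k"] by simp
    also have "\<dots> \<le> R + L + 1" using R[OF \<open>p \<in> F\<close>] near \<epsilon>'(2) p(1) by simp
    finally have "norm e * norm (y - xfb k) \<le> \<epsilon>' * (R + L + 1)"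
      using b(3) \<epsilon>'(1) unfolding e_def by (intro mult_mono) auto
    moreover have "- inner e (y - xfb k) \<le> norm e * norm (y - xfb k)"
      using norm_cauchy_schwarz[of "- e" "y - xfb k"] by simp
    ultimately have "- inner e (y - xfb k) \<le> \<epsilon>" using \<epsilon>'(3) by linarith
    moreover have "0 \<le> inner ((A y + v) - e) (y - xfb k)"
      unfolding e_def by (rule sum_monotone[OF p(2) b(1)])
    ultimately have "inner (A y + v) (xfb k) \<le> inner (A y + v) y + \<epsilon>"
      unfolding inner_diff_left inner_diff_right by linarith
    then show "inner (A (fst p) + snd p) (xfb k) \<le> inner (A (fst p) + snd p) (fst p) + \<epsilon>"
      unfolding p(1) fst_conv snd_conv .
  qed
qed

lemma minty_point: "\<exists>z. norm (x 0 - z) \<le> L \<and> (\<forall>y b. b \<in> B y \<longrightarrow> 0 \<le> inner (A y + b) (y - z))"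
proof -
  have "\<exists>z. dist (x 0) z \<le> L \<and>
      (\<forall>p\<in>{(y, b). b \<in> B y}. inner (A (fst p) + snd p) z \<le> inner (A (fst p) + snd p) (fst p))"
    using approximate_minty_point by (rule halfspaces_common_point)
  then obtain z where "dist (x 0) z \<le> L"
    and z: "\<forall>p\<in>{(y, b). b \<in> B y}. inner (A (fst p) + snd p) z \<le> inner (A (fst p) + snd p) (fst p)"
    by blast
  have "0 \<le> inner (A y + b) (y - z)" if "b \<in> B y" for y b
    using z[rule_format, of "(y, b)"] that unfolding inner_diff_right by simp
  with \<open>dist (x 0) z \<le> L\<close> show ?thesis unfolding dist_norm by blast
qed

theorem converges: "x \<longlonglongrightarrow> xbar"
proof -
  obtain z where z: "norm (x 0 - z) \<le> L" "\<And>y b. b \<in> B y \<Longrightarrow> 0 \<le> inner (A y + b) (y - z)"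
    using minty_point by blast
  have "z \<in> Z" using zer_sum_if_minty_variational[OF A_uniformly_continuous B_max] z(2) by blast
  then have "(norm (x 0 - xbar))\<^sup>2 \<le> (norm (x 0 - z))\<^sup>2"
    using proj_pythagoras[OF zeros(2,3,1), of z "x 0"] zero_le_power2[of "norm (z - xbar)"]
    unfolding xbar_def by linarith
  then have "norm (x 0 - xbar) \<le> norm (x 0 - z)" by (rule power2_le_imp_le) simp
  with z(1) have "norm (x 0 - xbar) \<le> L" by linarith
  moreover have "L \<le> norm (x 0 - xbar)"
    using dist_x0_tendsto by (rule LIMSEQ_le_const2) (use dist_x0_le_xbar in blast)
  ultimately have L: "L = norm (x 0 - xbar)" by linarith
  have bound: "norm (x k - xbar) \<le> sqrt (L\<^sup>2 - (norm (x 0 - x k))\<^sup>2)" for k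
  proof -
    have "xbar \<in> Gamma_set (x 0) (x k)" using xbar_in_zeros zeros_subset_Gamma by blast
    then have "(norm (x 0 - x k))\<^sup>2 + (norm (xbar - x k))\<^sup>2 \<le> (norm (x 0 - xbar))\<^sup>2"
      unfolding Gamma_set_def by (intro obtuse_pythagoras) simp
    then have "(norm (x k - xbar))\<^sup>2 \<le> L\<^sup>2 - (norm (x 0 - x k))\<^sup>2"
      unfolding L norm_minus_commute[of xbar] by linarith
    then show ?thesis by (rule real_le_rsqrt)
  qed
  have "(\<lambda>k. x k - xbar) \<longlonglongrightarrow> 0"
  proof (rule Lim_null_comparison)
    show "\<forall>\<^sub>F k in sequentially. norm (x k - xbar) \<le> sqrt (L\<^sup>2 - (norm (x 0 - x k))\<^sup>2)"
      using bound by (intro always_eventually allI)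
    have "(\<lambda>k. sqrt (L\<^sup>2 - (norm (x 0 - x k))\<^sup>2)) \<longlonglongrightarrow> sqrt (L\<^sup>2 - L\<^sup>2)"
      by (intro tendsto_intros dist_x0_tendsto)
    then show "(\<lambda>k. sqrt (L\<^sup>2 - (norm (x 0 - x k))\<^sup>2)) \<longlonglongrightarrow> 0" by simp
  qed
  then show ?thesis by (rule LIM_zero_cancel)
qed

end

theorem theorem4p15:
  fixes A1 A2 :: "'a::{real_inner,complete_space} \<Rightarrow> 'a"
    and B :: "'a \<Rightarrow> 'a set"
    and \<beta> \<theta> \<delta> \<delta>b \<alpha>0 :: real
    and x :: "nat \<Rightarrow> 'a" and alpha :: "nat \<Rightarrow> real"
  assumes "\<beta> > 0" and "cocoercive \<beta> A1"
    and "maximally_monotone (\<lambda>u. {A2 u})" and "uniformly_continuous_on UNIV A2"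
    and "maximally_monotone B"
    and "0 < \<theta>" "\<theta> < 1" "0 < \<delta>" "\<delta> < 1" "\<delta>b > 0" "1 - \<delta> - \<delta>b > 0"
    and "\<alpha>0 > 0" "\<alpha>0 \<le> 4 * \<beta> * \<delta>b"
    and "zer_sum (\<lambda>u. A1 u + A2 u) B \<noteq> {}"
    and "closed (zer_sum (\<lambda>u. A1 u + A2 u) B)"
    and "convex (zer_sum (\<lambda>u. A1 u + A2 u) B)"
    and "method2_seq A1 A2 B \<theta> \<delta> \<delta>b \<alpha>0 x alpha"
    and "\<forall>k. x (Suc k) \<noteq> x k"
  shows "x \<longlonglongrightarrow> proj (zer_sum (\<lambda>u. A1 u + A2 u) B) (x 0)"
proof -
  interpret method2 A1 A2 B \<beta> \<theta> \<delta> \<delta>b \<alpha>0 x alpha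
    by unfold_locales (use assms in auto)
  show ?thesis using converges unfolding xbar_def .
qed

end
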